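(* No semisimple representation $\Gamma\to\mathrm{SL}_4\mathbb{R}$ is irreducible. More precisely, every semisimple representation $\rho:\Gamma\to\mathrm{SL}_4\mathbb{R}$ preserves a line or a plane of $\mathbb{R}^4$, and $$X(\Gamma,\mathrm{SL}_4\mathbb{R})=i_*\big(\mathrm{Rep}^{SS}(\Gamma,\mathrm{SL}_3\mathbb{R})\big)/\mathrm{SL}_4\mathbb{R}\ \cup\ j_*\big(\mathrm{Rep}^{SS}(\Gamma,\mathrm{SL}_2\mathbb{R}\times\mathrm{SL}_2\mathbb{R})\big)/\mathrm{SL}_4\mathbb{R},$$ i.e. every semisimple representation is conjugate either to $\rho'\oplus 1$ with $\rho':\Gamma\to\mathrm{SL}_3\mathbb{R}$ semisimple, or to $\rho_1\oplus\rho_2$ with $\rho_1,\rho_2:\Gamma\to\mathrm{SL}_2\mathbb{R}$ semisimple.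
   Context: $\Gamma=\langle a,b\mid a^3=b^3=(ab)^3=1\rangle$ is the orbifold fundamental group of $S^2(3,3,3)$. $\mathrm{Rep}^{SS}(\Gamma,H)$ denotes semisimple representations $\Gamma\to H$; $i:\mathrm{SL}_3\mathbb{R}\hookrightarrow\mathrm{SL}_4\mathbb{R}$, $A\mapsto A\oplus 1$, and $j:\mathrm{SL}_2\mathbb{R}\times\mathrm{SL}_2\mathbb{R}\hookrightarrow\mathrm{SL}_4\mathbb{R}$, $(A,B)\mapsto A\oplus B$, are the natural inclusions and the star denotes postcomposition. $X(\Gamma,\mathrm{SL}_4\mathbb{R})$ is the real GIT quotient, identified with $\mathrm{Rep}^{SS}(\Gamma,\mathrm{SL}_4\mathbb{R})/\mathrm{SL}_4\mathbb{R}$. *)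

theory Defs
  imports "HOL-Analysis.Analysis"
begin

text \<open>A representation of Gamma = <a,b | a^3 = b^3 = (ab)^3 = 1> into SL_n(R) is determined
  by the images A = rho(a), B = rho(b), subject to the relations and det = 1.\<close>
definition rep_Gamma_SL :: "real^'n^'n \<Rightarrow> real^'n^'n \<Rightarrow> bool" where
  "rep_Gamma_SL A B \<longleftrightarrow> det A = 1 \<and> det B = 1 \<and>
     A ** A ** A = mat 1 \<and> B ** B ** B = mat 1 \<and> (A ** B) ** (A ** B) ** (A ** B) = mat 1"

definition invariant_subspace :: "real^'n^'n \<Rightarrow> real^'n^'n \<Rightarrow> (real^'n) set \<Rightarrow> bool" where
  "invariant_subspace A B V \<longleftrightarrow> subspace V \<and> (\<lambda>v. A *v v) ` V \<subseteq> V \<and> (\<lambda>v. B *v v) ` V \<subseteq> V"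

definition semisimple_rep :: "real^'n^'n \<Rightarrow> real^'n^'n \<Rightarrow> bool" where
  "semisimple_rep A B \<longleftrightarrow> (\<forall>V. invariant_subspace A B V \<longrightarrow>
     (\<exists>W. invariant_subspace A B W \<and> V \<inter> W = {0} \<and> {v + w | v w. v \<in> V \<and> w \<in> W} = UNIV))"

definition irreducible_rep :: "real^'n^'n \<Rightarrow> real^'n^'n \<Rightarrow> bool" where
  "irreducible_rep A B \<longleftrightarrow> (\<forall>V. invariant_subspace A B V \<longrightarrow> V = {0} \<or> V = UNIV)"

definition embed_i :: "real^3^3 \<Rightarrow> real^4^4" where
  "embed_i A = vector [
     vector [A$1$1, A$1$2, A$1$3, 0],
     vector [A$2$1, A$2$2, A$2$3, 0],
     vector [A$3$1, A$3$2, A$3$3, 0],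
     vector [0, 0, 0, 1]]"

definition embed_j :: "real^2^2 \<Rightarrow> real^2^2 \<Rightarrow> real^4^4" where
  "embed_j A B = vector [
     vector [A$1$1, A$1$2, 0, 0],
     vector [A$2$1, A$2$2, 0, 0],
     vector [0, 0, B$1$1, B$1$2],
     vector [0, 0, B$2$1, B$2$2]]"

definition conj_SL :: "real^'n^'n \<Rightarrow> real^'n^'n \<Rightarrow> real^'n^'n" where
  "conj_SL P M = P ** M ** matrix_inv P"

end

(* Write a and b for the images of the generators; a, b and ab have order three. On R^4 a map of
   order three has a fixed space of dimension 0, 2 or 4, since the rest of R^4 splits into planes on
   which it satisfies g^2 + g + 1 = 0. If, say, a is non-trivial with at least a plane of fixed
   vectors, then either the images of a - 1 and of a' - 1, for the conjugate a' = b a b^-1, span a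
   proper invariant subspace, or a dimension count produces a common fixed vector of a and a', and
   their common fixed space is invariant. If none of a, b, ab has a fixed vector, then the relations
   a^2 + a + 1 = 0, b^2 + b + 1 = 0 and (ab)^2 = (ab)^-1 = b^2 a^2 give ab + ba + a + b + 2 = 0, which
   makes {v. a v = b v} invariant. So every representation is reducible, and a semisimple one splits
   as V + W with dim V = 1 or 2. A line is fixed pointwise because 1 is the only real cube root of
   unity; bases adapted to the splitting, rescaled to determinant one, conjugate the representation
   into block form, and the blocks inherit semisimplicity. *)

theory Submission
  imports Defs
begin

section \<open>Kernels and fixed spaces\<close>

lemma dim_kernel_add_dim_image:
  fixes f :: "'a::euclidean_space \<Rightarrow> 'b::euclidean_space"
  assumes lf: "linear f" and S: "subspace S"
  shows "dim {x\<in>S. f x = 0} + dim (f ` S) = dim S"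
proof -
  define K where "K = {x\<in>S. f x = 0}"
  define C where "C = {y \<in> S. \<forall>x \<in> K. orthogonal x y}"
  have sK: "subspace K"
    unfolding K_def using S lf by (auto simp: subspace_def linear_add linear_cmul linear_0)
  have KS: "K \<subseteq> S" by (auto simp: K_def)
  have dim_C: "dim C + dim K = dim S"
    unfolding C_def by (rule dim_subspace_orthogonal_to_vectors[OF sK S KS])
  have sC: "subspace C"
    unfolding C_def using S by (auto simp: subspace_def orthogonal_clauses)
  have CS: "C \<subseteq> S" by (auto simp: C_def)
  have "f ` S \<subseteq> f ` C"
  proof
    fix z assume "z \<in> f ` S"
    then obtain x where x: "x \<in> S" "z = f x" by auto
    obtain y w where yw: "x = y + w" "y \<in> span K" "\<And>u. u \<in> span K \<Longrightarrow> orthogonal w u"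
      using orthogonal_subspace_decomp_exists[of K x] by metis
    have yK: "y \<in> K" using yw(2) sK by (metis span_eq_iff)
    have "w = x - y" using yw by simp
    then have "w \<in> S" using x yK KS S by (auto intro: subspace_diff)
    then have "w \<in> C" unfolding C_def using yw(3) yK by (auto simp: orthogonal_commute span_base)
    moreover have "f x = f w" using yw(1) yK lf by (simp add: K_def linear_add)
    ultimately show "z \<in> f ` C" using x by auto
  qed
  with CS have image_C: "f ` S = f ` C" by auto
  have "inj_on f C"
  proof (rule inj_onI)
    fix u v assume uv: "u \<in> C" "v \<in> C" "f u = f v"
    then have "u - v \<in> C" using sC by (simp add: subspace_diff)
    moreover have "f (u - v) = 0" using uv lf by (simp add: linear_diff)
    ultimately have "u - v \<in> K" using CS by (auto simp: K_def)
    with \<open>u - v \<in> C\<close> have "orthogonal (u - v) (u - v)" by (auto simp: C_def)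
    then show "u = v" by (simp add: orthogonal_def)
  qed
  moreover have "span C = C" using sC by simp
  ultimately have "dim (f ` C) = dim C" using dim_image_eq[OF lf] by metis
  then show ?thesis using dim_C image_C by (simp add: K_def)
qed

lemma linear_compose': "linear f \<Longrightarrow> linear g \<Longrightarrow> linear (\<lambda>v. f (g v))"
  using linear_compose[of g f] by (simp add: o_def)

lemma linear_diff_id: "linear g \<Longrightarrow> linear (\<lambda>x. g x - x)"
  by (simp add: linear_compose_sub linear_id[unfolded id_def])

lemma dim_fixed_add_dim_range_diff:
  fixes g :: "'a::euclidean_space \<Rightarrow> 'a"
  assumes "linear g"
  shows "dim {x. g x = x} + dim (range (\<lambda>x. g x - x)) = DIM('a)"
  using dim_kernel_add_dim_image[OF linear_diff_id[OF assms] subspace_UNIV] by simp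

lemma dim_fixed_conjugate:
  fixes x y y' :: "'a::euclidean_space \<Rightarrow> 'a"
  assumes ly: "linear y" and yy': "\<And>v. y (y' v) = v" and y'y: "\<And>v. y' (y v) = v"
  shows "dim {v. y (x (y' v)) = v} = dim {v. x v = v}"
proof -
  have "{v. y (x (y' v)) = v} = y ` {v. x v = v}"
  proof (intro equalityI subsetI)
    fix v assume "v \<in> {v. y (x (y' v)) = v}"
    then have "y' (y (x (y' v))) = y' v" by simp
    then have "x (y' v) = y' v" by (simp only: y'y)
    moreover have "v = y (y' v)" by (simp only: yy')
    ultimately show "v \<in> y ` {v. x v = v}" by blast
  next
    fix v assume "v \<in> y ` {v. x v = v}"
    then show "v \<in> {v. y (x (y' v)) = v}" by (auto simp only: y'y mem_Collect_eq image_iff)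
  qed
  moreover have "inj_on y (span {v. x v = v})" by (metis injI inj_on_subset subset_UNIV y'y)
  ultimately show ?thesis using dim_image_eq[OF ly] by simp
qed

section \<open>Linear maps of order three\<close>

lemma real_sq_add_self_add_one_pos: "0 < (x::real) * x + x + 1"
proof -
  have "x * x + x + 1 = (x + 1/2) * (x + 1/2) + 3/4" by (simp add: algebra_simps)
  then show ?thesis using zero_le_square[of "x + 1/2"] by linarith
qed

lemma real_cube_eq_one_iff: "(x::real) * x * x = 1 \<longleftrightarrow> x = 1"
proof
  assume "x * x * x = 1"
  then have "(x - 1) * (x * x + x + 1) = 0" by (simp add: algebra_simps)
  then show "x = 1" using real_sq_add_self_add_one_pos[of x] by simp
qed simp

lemma cyclotomic3_no_eigenvector:
  fixes g :: "'a::real_vector \<Rightarrow> 'a"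
  assumes lg: "linear g" and k0: "k \<noteq> 0" and rel: "g (g k) + g k + k = 0"
  shows "g k \<noteq> c *\<^sub>R k"
proof
  assume gk: "g k = c *\<^sub>R k"
  then have "g (g k) = (c * c) *\<^sub>R k" using lg by (simp add: linear_scale)
  with rel gk have "(c * c + c + 1) *\<^sub>R k = 0" by (simp add: algebra_simps)
  then show False using k0 real_sq_add_self_add_one_pos[of c] by simp
qed

lemma cyclotomic3_dim_orbit_eq_2:
  fixes g :: "'a::euclidean_space \<Rightarrow> 'a"
  assumes lg: "linear g" and k0: "k \<noteq> 0" and rel: "g (g k) + g k + k = 0"
  shows "dim {k, g k} = 2"
proof -
  have "g k \<notin> span {k}"
    using cyclotomic3_no_eigenvector[OF lg k0 rel] by (auto simp: span_singleton)
  then have "independent {g k, k}" by (rule independent_insertI) (simp add: k0)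
  moreover have "g k \<noteq> k" using cyclotomic3_no_eigenvector[OF lg k0 rel, of 1] by simp
  ultimately have "dim {g k, k} = 2" by (simp add: dim_eq_card_independent)
  then show ?thesis by (simp add: insert_commute)
qed

lemma cyclotomic3_square_in_span:
  fixes g :: "'a::real_vector \<Rightarrow> 'a"
  assumes "g (g u) + g u + u = 0"
  shows "g (g u) \<in> span {u, g u}"
proof -
  have "g (g u) = (-1) *\<^sub>R u + (-1) *\<^sub>R g u" using assms by (simp add: algebra_simps eq_neg_iff_add_eq_0)
  also have "\<dots> \<in> span {u, g u}" by (intro span_add span_scale span_base) auto
  finally show ?thesis .
qed

lemma span_orbit_invariant:
  fixes g :: "'a::real_vector \<Rightarrow> 'a"
  assumes lg: "linear g" and "g (g u) \<in> span {u, g u}"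
  shows "g ` span {u, g u} \<subseteq> span {u, g u}"
proof -
  have "span (g ` {u, g u}) \<subseteq> span {u, g u}"
    using assms(2) by (intro span_minimal) (auto intro: span_base)
  moreover have "g ` span {u, g u} = span (g ` {u, g u})" by (rule linear_span_image[OF lg, symmetric])
  ultimately show ?thesis by simp
qed

lemma order3_fixed_point_free_cyclotomic3:
  fixes g :: "'a::real_vector \<Rightarrow> 'a"
  assumes lg: "linear g" and g3: "\<And>x. g (g (g x)) = x" and free: "\<And>v. g v = v \<Longrightarrow> v = 0"
  shows "g (g u) + g u + u = 0"
  using free[of "g (g u) + g u + u"] lg g3 by (simp add: linear_add algebra_simps)

lemma order3_range_diff_cyclotomic3:
  fixes g :: "'a::real_vector \<Rightarrow> 'a"
  assumes lg: "linear g" and g3: "\<And>x. g (g (g x)) = x"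
  shows "g (g (g t - t)) + g (g t - t) + (g t - t) = 0"
  using lg g3 by (simp add: linear_diff)

lemma span_pair_proper:
  fixes u v :: "'a::euclidean_space"
  assumes "u \<noteq> 0" and "DIM('a) > 2"
  shows "span {u, v} \<noteq> {0}" "span {u, v} \<noteq> UNIV"
proof -
  show "span {u, v} \<noteq> {0}" using assms span_base[of u "{u,v}"] by auto
  have "dim (span {u, v}) \<le> card {u, v}" by (rule dim_le_card) auto
  also have "\<dots> \<le> 2" by (simp add: card_insert_le_m1)
  finally have "dim {u, v} < DIM('a)" using assms(2) by simp
  then show "span {u, v} \<noteq> UNIV" by (metis dim_UNIV dim_span less_irrefl)
qed

lemma order3_proper_invariant_subspace:
  fixes g :: "'a::euclidean_space \<Rightarrow> 'a"
  assumes lg: "linear g" and g3: "\<And>x. g (g (g x)) = x" and "DIM('a) > 2"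
  shows "\<exists>U. subspace U \<and> g ` U \<subseteq> U \<and> U \<noteq> {0} \<and> U \<noteq> UNIV"
proof -
  obtain u :: 'a where u: "u \<noteq> 0" "g (g u) \<in> span {u, g u}"
  proof (cases "\<exists>v. v \<noteq> 0 \<and> g v = v")
    case True
    then obtain v where "v \<noteq> 0" "g v = v" by blast
    then show ?thesis using that[of v] span_base[of v "{v, g v}"] by simp
  next
    case False
    obtain u :: 'a where "u \<in> Basis" using nonempty_Basis by blast
    then have "u \<noteq> 0" by auto
    moreover have "g (g u) \<in> span {u, g u}"
      using False by (intro cyclotomic3_square_in_span order3_fixed_point_free_cyclotomic3[OF lg g3]) auto
    ultimately show ?thesis using that by blast
  qed
  then show ?thesis
    using span_orbit_invariant[OF lg u(2)] span_pair_proper[OF u(1) assms(3)] by blast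
qed

lemma cyclotomic3_planes_meeting_eq:
  fixes g :: "'a::euclidean_space \<Rightarrow> 'a"
  assumes lg: "linear g" and u: "u \<noteq> 0" "g (g u) + g u + u = 0"
    and U: "subspace U" "g ` U \<subseteq> U" "dim U = 2" "u \<in> U"
    and U': "subspace U'" "g ` U' \<subseteq> U'" "dim U' = 2" "u \<in> U'"
  shows "U = U'"
proof -
  have plane: "span {u, g u} = S" if "subspace S" "g ` S \<subseteq> S" "dim S = 2" "u \<in> S" for S
  proof -
    have "{u, g u} \<subseteq> S" using that by auto
    moreover have "dim S \<le> dim {u, g u}" using cyclotomic3_dim_orbit_eq_2[OF lg u] that(3) by simp
    ultimately have "span {u, g u} = span S" by (rule dim_eq_span)
    then show ?thesis using that(1) by simp
  qed
  show ?thesis using plane[OF U] plane[OF U'] by simp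
qed

text \<open>On the 3-dimensional range of \<open>g - 1\<close> we have \<open>g\<^sup>2 + g + 1 = 0\<close>, so it would contain
  two distinct invariant planes; these meet in a nonzero vector, whose orbit plane is both of them.\<close>

lemma order3_dim_fixed_ne_1:
  fixes g :: "real^4 \<Rightarrow> real^4"
  assumes lg: "linear g" and g3: "\<And>x. g (g (g x)) = x"
  shows "dim {x. g x = x} \<noteq> 1"
proof
  assume "dim {x. g x = x} = 1"
  define K where "K = range (\<lambda>x. g x - x)"
  have sK: "subspace K" unfolding K_def by (rule linear_subspace_image[OF linear_diff_id[OF lg] subspace_UNIV])
  have dim_K: "dim K = 3" using dim_fixed_add_dim_range_diff[OF lg] \<open>dim {x. g x = x} = 1\<close> by (simp add: K_def)
  have rel: "g (g k) + g k + k = 0" if "k \<in> K" for k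
    using that order3_range_diff_cyclotomic3[OF lg g3] by (auto simp: K_def)
  have gK: "g ` K \<subseteq> K" using lg by (auto simp: K_def linear_diff)
  have plane: "subspace (span {k, g k}) \<and> g ` span {k, g k} \<subseteq> span {k, g k} \<and>
      dim (span {k, g k}) = 2 \<and> span {k, g k} \<subseteq> K" if "k \<in> K" "k \<noteq> 0" for k
  proof (intro conjI)
    show "g ` span {k, g k} \<subseteq> span {k, g k}"
      by (intro span_orbit_invariant[OF lg] cyclotomic3_square_in_span rel that)
    show "dim (span {k, g k}) = 2" using cyclotomic3_dim_orbit_eq_2[OF lg that(2) rel[OF that(1)]] by simp
    show "span {k, g k} \<subseteq> K" using that(1) gK sK by (intro span_minimal) auto
  qed simp
  have "\<not> K \<subseteq> {0}" using dim_K by (metis dim_eq_0 zero_neq_numeral)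
  then obtain w where w: "w \<in> K" "w \<noteq> 0" by auto
  define U where "U = span {w, g w}"
  have U: "subspace U" "g ` U \<subseteq> U" "dim U = 2" "U \<subseteq> K" using plane[OF w] by (simp_all add: U_def)
  have "\<not> K \<subseteq> U" using dim_subset[of K U] dim_K U(3) by auto
  then obtain w' where w': "w' \<in> K" "w' \<notin> U" by auto
  then have "w' \<noteq> 0" using U(1) by (auto simp: subspace_0)
  define U' where "U' = span {w', g w'}"
  have U': "subspace U'" "g ` U' \<subseteq> U'" "dim U' = 2" "U' \<subseteq> K"
    using plane[OF w'(1) \<open>w' \<noteq> 0\<close>] by (simp_all add: U'_def)
  have "{x + y |x y. x \<in> U \<and> y \<in> U'} \<subseteq> K"
    using U(4) U'(4) sK by (auto intro: subspace_add)
  then have "dim {x + y |x y. x \<in> U \<and> y \<in> U'} \<le> dim K" by (rule dim_subset)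
  moreover have "dim {x + y |x y. x \<in> U \<and> y \<in> U'} + dim (U \<inter> U') = dim U + dim U'"
    by (rule dim_sums_Int[OF U(1) U'(1)])
  ultimately have "dim (U \<inter> U') \<noteq> 0" using dim_K U(3) U'(3) by linarith
  then have "\<not> U \<inter> U' \<subseteq> {0}" by simp
  then obtain u where u: "u \<in> U" "u \<in> U'" "u \<noteq> 0" by blast
  then have "U = U'"
    using cyclotomic3_planes_meeting_eq[OF lg u(3) rel U(1-3) u(1) U'(1-3) u(2)] U(4) by blast
  moreover have "w' \<in> U'" by (simp add: U'_def span_base)
  ultimately show False using w'(2) by simp
qed

section \<open>Pairs of maps satisfying the relations of \<open>\<Gamma>\<close>\<close>

definition cyclic_sum :: "('a::real_vector \<Rightarrow> 'a) \<Rightarrow> 'a \<Rightarrow> 'a" where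
  "cyclic_sum g v = g (g v) + g v + v"

lemma linear_cyclic_sum: "linear g \<Longrightarrow> linear (cyclic_sum g)"
  unfolding cyclic_sum_def by (intro linearI) (simp_all add: linear_add linear_scale algebra_simps)

lemma cyclic_sum_fixed:
  assumes "linear g" and "\<And>x. g (g (g x)) = x"
  shows "g (cyclic_sum g v) = cyclic_sum g v"
  using assms by (simp add: cyclic_sum_def linear_add)

lemma cyclic_sum_range_diff:
  assumes "linear g" and "\<And>x. g (g (g x)) = x"
  shows "cyclic_sum g (g v - v) = 0"
  using assms by (simp add: cyclic_sum_def linear_diff)

lemma order3_fixed_space_eq_cyclic_sum_image:
  fixes p q :: "'a::real_vector \<Rightarrow> 'a"
  assumes lp: "linear p" and lq: "linear q"
    and p3: "\<And>x. p (p (p x)) = x" and pq3: "\<And>x. p (q (p (q (p (q x))))) = x"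
    and onto: "{u + w | u w. u \<in> range (\<lambda>x. p x - x) \<and> w \<in> range (\<lambda>x. q x - x)} = UNIV"
  shows "(\<lambda>(r, s). cyclic_sum (\<lambda>x. p (q x)) (r + p s)) ` (range (\<lambda>x. p x - x) \<times> range (\<lambda>x. q x - x))
    = {x. p (q x) = x}" (is "?\<phi> ` (?KP \<times> ?KQ) = _")
proof
  have lc: "linear (\<lambda>x. p (q x))" by (rule linear_compose'[OF lp lq])
  show "?\<phi> ` (?KP \<times> ?KQ) \<subseteq> {x. p (q x) = x}"
    using cyclic_sum_fixed[OF lc pq3] by auto
  show "{x. p (q x) = x} \<subseteq> ?\<phi> ` (?KP \<times> ?KQ)"
  proof
    fix x assume "x \<in> {x. p (q x) = x}"
    then have "p (q x) = x" by simp
    define z where "z = (1/3) *\<^sub>R x"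
    have "p (q z) = z" using linear_scale[OF lc, of "1/3" x] \<open>p (q x) = x\<close> by (simp add: z_def)
    then have "cyclic_sum (\<lambda>x. p (q x)) z = x" by (simp add: cyclic_sum_def z_def scaleR_add_left[symmetric])
    obtain u w where uw: "p (p z) = u + w" "u \<in> ?KP" "w \<in> ?KQ" using onto by blast
    have "p u \<in> ?KP" using uw(2) lp by (auto simp: linear_diff)
    have "z = p u + p w" using uw(1) lp p3 by (metis linear_add)
    then have "?\<phi> (p u, w) = x" using \<open>cyclic_sum _ z = x\<close> by simp
    then show "x \<in> ?\<phi> ` (?KP \<times> ?KQ)" using \<open>p u \<in> ?KP\<close> uw(3) by force
  qed
qed

text \<open>The map \<open>(r, s) \<mapsto> cyclic_sum (p \<circ> q) (r + p s)\<close> sends \<open>(p v - v, q v - v)\<close> to zero;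
  comparing dimensions of kernels and images forces a common fixed vector.\<close>
lemma order3_pair_common_fixed_vector:
  fixes p q :: "'a::euclidean_space \<Rightarrow> 'a"
  assumes lp: "linear p" and lq: "linear q"
    and p3: "\<And>x. p (p (p x)) = x" and pq3: "\<And>x. p (q (p (q (p (q x))))) = x"
    and big: "dim {x. p x = x} + dim {x. q x = x} + dim {x. p (q x) = x} > DIM('a)"
    and onto: "{u + w | u w. u \<in> range (\<lambda>x. p x - x) \<and> w \<in> range (\<lambda>x. q x - x)} = UNIV"
  shows "\<exists>v. v \<noteq> 0 \<and> p v = v \<and> q v = v"
proof -
  define KP where "KP = range (\<lambda>x. p x - x)"
  define KQ where "KQ = range (\<lambda>x. q x - x)"
  define \<phi> where "\<phi> = (\<lambda>r. cyclic_sum (\<lambda>x. p (q x)) (fst r + p (snd r)))"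
  define \<psi> where "\<psi> = (\<lambda>v. (p v - v, q v - v))"
  have sKP: "subspace KP" and sKQ: "subspace KQ"
    unfolding KP_def KQ_def using lp lq by (simp_all add: linear_subspace_image linear_diff_id)
  have lc: "linear (\<lambda>x. p (q x))" by (rule linear_compose'[OF lp lq])
  have l\<phi>: "linear \<phi>" unfolding \<phi>_def using linear_cyclic_sum[OF lc] lp
    by (intro linearI) (simp_all add: linear_add linear_scale algebra_simps)
  have l\<psi>: "linear \<psi>" unfolding \<psi>_def using lp lq
    by (intro linearI) (simp_all add: linear_add linear_scale algebra_simps)
  have "\<phi> ` (KP \<times> KQ) = {x. p (q x) = x}"
    using order3_fixed_space_eq_cyclic_sum_image[OF lp lq p3 pq3 onto]
    by (simp add: \<phi>_def KP_def KQ_def case_prod_beta')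
  then have dim_ker_\<phi>: "dim {s \<in> KP \<times> KQ. \<phi> s = 0} + dim {x. p (q x) = x} = dim KP + dim KQ"
    using dim_kernel_add_dim_image[OF l\<phi> subspace_Times[OF sKP sKQ]] dim_Times[OF sKP sKQ] by simp
  have "\<psi> v \<in> KP \<times> KQ \<and> \<phi> (\<psi> v) = 0" for v
  proof
    show "\<psi> v \<in> KP \<times> KQ" by (auto simp: \<psi>_def KP_def KQ_def)
    have "fst (\<psi> v) + p (snd (\<psi> v)) = p (q v) - v" using lp by (simp add: \<psi>_def linear_diff)
    then show "\<phi> (\<psi> v) = 0" using cyclic_sum_range_diff[OF lc pq3] by (simp only: \<phi>_def)
  qed
  then have "range \<psi> \<subseteq> {s \<in> KP \<times> KQ. \<phi> s = 0}" by blast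
  then have "dim (range \<psi>) \<le> dim {s \<in> KP \<times> KQ. \<phi> s = 0}" by (rule dim_subset)
  moreover have "dim {v. \<psi> v = 0} + dim (range \<psi>) = DIM('a)"
    using dim_kernel_add_dim_image[OF l\<psi> subspace_UNIV] by simp
  moreover have "dim {x. p x = x} + dim KP = DIM('a)" "dim {x. q x = x} + dim KQ = DIM('a)"
    unfolding KP_def KQ_def by (simp_all add: dim_fixed_add_dim_range_diff lp lq)
  ultimately have "dim {v. \<psi> v = 0} \<noteq> 0" using dim_ker_\<phi> big by linarith
  then obtain v where "\<psi> v = 0" "v \<noteq> 0" by auto
  then show ?thesis by (auto simp: \<psi>_def zero_prod_def)
qed

text \<open>In \<open>\<Gamma>\<close>, \<open>x \<cdot> (y x y\<^sup>-\<^sup>1) = y\<^sup>-\<^sup>1 x\<^sup>2 y\<close>, because \<open>x y x = (y x y)\<^sup>-\<^sup>1\<close>.\<close>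
lemma order3_pair_conjugate_product:
  assumes x3: "\<And>v. x (x (x v)) = v" and y3: "\<And>v. y (y (y v)) = v"
    and xy3: "\<And>v. x (y (x (y (x (y v))))) = v"
  shows "x (y (x (y (y v)))) = y (y (x (x (y v))))"
  using xy3[of "y (y (x (x (y v))))"] by (simp add: x3 y3)

lemma order3_fixed_iff_square_fixed:
  assumes "\<And>v. x (x (x v)) = v"
  shows "x (x v) = v \<longleftrightarrow> x v = v"
proof
  assume "x (x v) = v"
  then have "x (x (x v)) = x v" by simp
  then show "x v = v" using assms by simp
qed simp

lemma order3_pair_conjugate_dim_fixed:
  fixes x y :: "'a::euclidean_space \<Rightarrow> 'a"
  assumes lx: "linear x" and ly: "linear y" and x3: "\<And>v. x (x (x v)) = v"
    and y3: "\<And>v. y (y (y v)) = v" and xy3: "\<And>v. x (y (x (y (x (y v))))) = v"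
  shows "dim {v. y (x (y (y v))) = v} = dim {v. x v = v}"
    and "dim {v. x (y (x (y (y v)))) = v} = dim {v. x v = v}"
proof -
  have lyy: "linear (\<lambda>v. y (y v))" by (rule linear_compose'[OF ly ly])
  show "dim {v. y (x (y (y v))) = v} = dim {v. x v = v}"
    by (rule dim_fixed_conjugate[OF ly]) (simp_all add: y3)
  have "dim {v. y (y (x (x (y v)))) = v} = dim {v. x (x v) = v}"
    by (rule dim_fixed_conjugate[OF lyy]) (simp_all add: y3)
  then show "dim {v. x (y (x (y (y v)))) = v} = dim {v. x v = v}"
    by (simp add: order3_pair_conjugate_product[OF x3 y3 xy3] order3_fixed_iff_square_fixed[OF x3])
qed

lemma order3_common_fixed_conjugate_invariant:
  assumes x3: "\<And>v. x (x (x v)) = v" and y3: "\<And>v. y (y (y v)) = v"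
    and xy3: "\<And>v. x (y (x (y (x (y v))))) = v"
    and u: "x u = u" "y (x (y (y u))) = u"
  shows "x (y u) = y u" "y (x (y (y (y u)))) = y u"
proof -
  have "y (y (x (x (y u)))) = u" using u order3_pair_conjugate_product[OF x3 y3 xy3, of u] by simp
  then have "y (y (y (x (x (y u))))) = y u" by simp
  then have "x (x (y u)) = y u" by (simp only: y3)
  then show "x (y u) = y u" by (simp add: order3_fixed_iff_square_fixed[OF x3])
  show "y (x (y (y (y u)))) = y u" using u(1) by (simp add: y3)
qed

lemma linear_image_sum_ranges_subset:
  assumes lf: "linear f" and sD: "subspace D"
    and "\<And>s. f (\<alpha> s) \<in> D" and "\<And>t. f (\<beta> t) \<in> D"
  shows "f ` {u + w | u w. u \<in> range \<alpha> \<and> w \<in> range \<beta>} \<subseteq> D"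
  using assms by (auto simp: linear_add subspace_add)

lemma order3_sum_ranges_conjugate_invariant:
  fixes x y :: "'a::real_vector \<Rightarrow> 'a"
  assumes lx: "linear x" and ly: "linear y" and x3: "\<And>v. x (x (x v)) = v"
    and y3: "\<And>v. y (y (y v)) = v" and xy3: "\<And>v. x (y (x (y (x (y v))))) = v"
    and D: "D = {u + w | u w. u \<in> range (\<lambda>v. x v - v) \<and> w \<in> range (\<lambda>v. y (x (y (y v))) - v)}"
  shows "subspace D" "x ` D \<subseteq> D" "y ` D \<subseteq> D"
proof -
  let ?x' = "\<lambda>v. y (x (y (y v)))"
  have lx': "linear ?x'" by (rule linear_compose'[OF ly linear_compose'[OF lx linear_compose'[OF ly ly]]])
  show sD: "subspace D" unfolding D
    using lx lx' by (simp add: subspace_sums linear_subspace_image linear_diff_id)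
  have l0: "x 0 = 0" "?x' 0 = 0" using linear_0[OF lx] linear_0[OF lx'] by simp_all
  have m1: "x t - t \<in> D" for t unfolding D by (rule CollectI, rule exI[of _ "x t - t"], rule exI[of _ 0]) (auto simp: l0 intro: image_eqI[of _ _ 0])
  have m2: "?x' t - t \<in> D" for t unfolding D by (rule CollectI, rule exI[of _ 0], rule exI[of _ "?x' t - t"]) (auto simp: l0 intro: image_eqI[of _ _ 0])
  have m12: "x (?x' t) - t \<in> D" for t
    using subspace_add[OF sD m1[of "?x' t"] m2[of t]] by simp
  note sum_ranges_subset = linear_image_sum_ranges_subset[OF _ sD, of _ "\<lambda>v. x v - v" "\<lambda>v. ?x' v - v", folded D]
  show "x ` D \<subseteq> D"
  proof (rule sum_ranges_subset[OF lx])
    show "x (x s - s) \<in> D" for s using m1[of "x s"] lx by (simp add: linear_diff)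
    show "x (?x' t - t) \<in> D" for t
      using subspace_diff[OF sD m12[of t] m1[of t]] lx by (simp add: linear_diff)
  qed
  show "y ` D \<subseteq> D"
  proof (rule sum_ranges_subset[OF ly])
    show "y (x s - s) \<in> D" for s using m2[of "y s"] ly by (simp add: linear_diff y3)
    show "y (?x' t - t) \<in> D" for t
    proof -
      have "x (x (y (x (y (x t))))) = x (y (y t))"
        using arg_cong[where f=x, OF xy3[of "y (y t)"]] by (simp add: y3)
      then have "x (?x' (x (?x' (y t)))) = y (y (x (y (y t))))"
        by (simp add: order3_pair_conjugate_product[OF x3 y3 xy3] y3)
      then have "y (?x' t - t) = x (?x' (x (?x' (y t)))) - y t"
        using ly by (simp add: linear_diff y3)
      also have "\<dots> = (x (?x' (x (?x' (y t)))) - x (?x' (y t))) + (x (?x' (y t)) - y t)" by simp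
      finally show ?thesis using m12 sD by (metis subspace_add)
    qed
  qed
qed

text \<open>Compare \<open>x\<close> with its conjugate \<open>x' = y x y\<^sup>-\<^sup>1\<close>: either \<open>(x - 1)(\<real>\<^sup>4) + (x' - 1)(\<real>\<^sup>4)\<close> is a
  proper invariant subspace, or the fixed spaces of \<open>x\<close>, \<open>x'\<close>, \<open>x x'\<close> are large enough for a common
  fixed vector of \<open>x\<close> and \<open>x'\<close>, and their common fixed space is invariant.\<close>

lemma order3_pair_reducible_of_dim_fixed_ge_2:
  fixes x y :: "real^4 \<Rightarrow> real^4"
  assumes lx: "linear x" and ly: "linear y" and x3: "\<And>v. x (x (x v)) = v"
    and y3: "\<And>v. y (y (y v)) = v" and xy3: "\<And>v. x (y (x (y (x (y v))))) = v"
    and nontrivial: "\<exists>v. x v \<noteq> v" and fixed2: "dim {v. x v = v} \<ge> 2"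
  shows "\<exists>U. subspace U \<and> x ` U \<subseteq> U \<and> y ` U \<subseteq> U \<and> U \<noteq> {0} \<and> U \<noteq> UNIV"
proof -
  define x' where "x' = (\<lambda>v. y (x (y (y v))))"
  have lx': "linear x'" unfolding x'_def by (rule linear_compose'[OF ly linear_compose'[OF lx linear_compose'[OF ly ly]]])
  have x'3: "\<And>v. x' (x' (x' v)) = v" unfolding x'_def by (simp add: x3 y3)
  have xx': "x (x' w) = y (y (x (x (y w))))" for w
    unfolding x'_def by (rule order3_pair_conjugate_product[OF x3 y3 xy3])
  have xx'3: "\<And>v. x (x' (x (x' (x (x' v))))) = v" by (simp add: xx' x3 y3)
  define D where "D = {u + w | u w. u \<in> range (\<lambda>v. x v - v) \<and> w \<in> range (\<lambda>v. x' v - v)}"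
  show ?thesis
  proof (cases "D = UNIV")
    case True
    have "dim {v. x v = v} + dim {v. x' v = v} + dim {v. x (x' v) = v} > 4"
      using order3_pair_conjugate_dim_fixed[OF lx ly x3 y3 xy3] fixed2 by (simp add: x'_def)
    then obtain v where v: "v \<noteq> 0" "x v = v" "x' v = v"
      using order3_pair_common_fixed_vector[OF lx lx' x3 xx'3] True by (auto simp: D_def)
    define U where "U = {v. x v = v \<and> x' v = v}"
    have "subspace U" unfolding U_def using lx lx'
      by (auto simp: subspace_def linear_add linear_scale linear_0)
    moreover have "x ` U \<subseteq> U" "y ` U \<subseteq> U"
      using order3_common_fixed_conjugate_invariant[OF x3 y3 xy3] by (auto simp: U_def x'_def y3)
    moreover have "U \<noteq> {0}" "U \<noteq> UNIV" using v nontrivial by (auto simp: U_def)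
    ultimately show ?thesis by blast
  next
    case False
    note D_invariant = order3_sum_ranges_conjugate_invariant[OF lx ly x3 y3 xy3 D_def[unfolded x'_def]]
    obtain v where "x v \<noteq> v" using nontrivial by blast
    moreover have "x v - v = (x v - v) + (x' 0 - 0)" using linear_0[OF lx'] by simp
    then have "x v - v \<in> D" unfolding D_def by blast
    ultimately have "D \<noteq> {0}" by auto
    then show ?thesis using D_invariant False by blast
  qed
qed

lemma order3_fixed_point_free_square:
  fixes g :: "'a::real_vector \<Rightarrow> 'a"
  assumes "linear g" and "\<And>x. g (g (g x)) = x" and "\<And>v. g v = v \<Longrightarrow> v = 0"
  shows "g (g u) = - g u - u"
  using order3_fixed_point_free_cyclotomic3[OF assms] by (simp add: eq_neg_iff_add_eq_0 algebra_simps)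

text \<open>With \<open>a\<^sup>2 = - a - 1\<close>, \<open>b\<^sup>2 = - b - 1\<close> and \<open>(a b)\<^sup>2 = (a b)\<^sup>-\<^sup>1 = b\<^sup>2 a\<^sup>2\<close>,
  expanding \<open>b\<^sup>2 a\<^sup>2 = - a b - 1\<close> gives \<open>b a = - a b - a - b - 2\<close>.\<close>
lemma order3_fixed_point_free_pair_identity:
  fixes a b :: "'a::real_vector \<Rightarrow> 'a"
  assumes la: "linear a" and lb: "linear b"
    and a3: "\<And>x. a (a (a x)) = x" and b3: "\<And>x. b (b (b x)) = x"
    and ab3: "\<And>x. a (b (a (b (a (b x))))) = x"
    and free_a: "\<And>v. a v = v \<Longrightarrow> v = 0" and free_b: "\<And>v. b v = v \<Longrightarrow> v = 0"
    and free_ab: "\<And>v. a (b v) = v \<Longrightarrow> v = 0"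
  shows "b (a w) = - a (b w) - a w - b w - w - w"
proof -
  note ra = order3_fixed_point_free_square[OF la a3 free_a]
  note rb = order3_fixed_point_free_square[OF lb b3 free_b]
  note rab = order3_fixed_point_free_square[OF linear_compose'[OF la lb] ab3 free_ab]
  have "b (a w) + a w + b w + w = b (b (a (a w)))" using lb by (simp add: rb ra linear_diff linear_neg)
  also have "\<dots> = a (b (a (b w)))" using ab3[of "b (b (a (a w)))"] by (simp add: a3 b3)
  also have "\<dots> = - a (b w) - w" by (rule rab)
  finally show ?thesis by (simp add: algebra_simps eq_neg_iff_add_eq_0 neg_eq_iff_add_eq_0)
qed

lemma order3_pair_fixed_point_free_reducible:
  fixes a b :: "'a::euclidean_space \<Rightarrow> 'a"
  assumes la: "linear a" and lb: "linear b"
    and a3: "\<And>x. a (a (a x)) = x" and b3: "\<And>x. b (b (b x)) = x"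
    and ab3: "\<And>x. a (b (a (b (a (b x))))) = x"
    and free_a: "\<And>v. a v = v \<Longrightarrow> v = 0" and free_b: "\<And>v. b v = v \<Longrightarrow> v = 0"
    and free_ab: "\<And>v. a (b v) = v \<Longrightarrow> v = 0" and "DIM('a) > 2"
  shows "\<exists>U. subspace U \<and> a ` U \<subseteq> U \<and> b ` U \<subseteq> U \<and> U \<noteq> {0} \<and> U \<noteq> UNIV"
proof (cases "\<forall>w. a w = b w")
  case True
  then have "b = a" by auto
  then show ?thesis using order3_proper_invariant_subspace[OF la a3 \<open>DIM('a) > 2\<close>] by blast
next
  case False
  then obtain w where w: "a w \<noteq> b w" by auto
  note ra = order3_fixed_point_free_square[OF la a3 free_a]
  note rb = order3_fixed_point_free_square[OF lb b3 free_b]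
  note ab = order3_fixed_point_free_pair_identity[OF la lb a3 b3 ab3 free_a free_b free_ab]
  define U where "U = {v. a v = b v}"
  have "subspace U" unfolding U_def using la lb by (auto simp: subspace_def linear_add linear_scale linear_0)
  moreover have aU: "a ` U \<subseteq> U"
  proof (rule image_subsetI)
    fix v assume "v \<in> U"
    then have "b v = a v" by (simp add: U_def)
    then show "a v \<in> U" by (simp add: U_def ra ab algebra_simps)
  qed
  moreover have "b ` U \<subseteq> U" using aU by (auto simp: U_def image_subset_iff)
  moreover have "a (a w - b w) = b (a w - b w)"
    by (simp add: linear_diff[OF la] linear_diff[OF lb] ra rb ab algebra_simps)
  then have "a w - b w \<in> U - {0}" using w by (simp add: U_def)
  moreover have "U \<noteq> UNIV" using w by (auto simp: U_def)
  ultimately show ?thesis by blast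
qed

lemma order3_pair_reducible_of_trivial:
  fixes a b :: "real^4 \<Rightarrow> real^4"
  assumes la: "linear a" and lb: "linear b"
    and a3: "\<And>x. a (a (a x)) = x" and b3: "\<And>x. b (b (b x)) = x"
    and trivial: "(\<forall>v. a v = v) \<or> (\<forall>v. b v = v) \<or> (\<forall>v. a (b v) = v)"
  shows "\<exists>U. subspace U \<and> a ` U \<subseteq> U \<and> b ` U \<subseteq> U \<and> U \<noteq> {0} \<and> U \<noteq> UNIV"
proof -
  have "(\<forall>v. a v = v) \<or> (\<forall>v. b v = v) \<or> (\<forall>v. b v = a (a v))"
    using trivial by (metis a3)
  then show ?thesis
    using order3_proper_invariant_subspace[OF la a3] order3_proper_invariant_subspace[OF lb b3]
    by (auto simp: image_subset_iff)
qed

lemma order3_pair_reducible: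
  fixes a b :: "real^4 \<Rightarrow> real^4"
  assumes la: "linear a" and lb: "linear b"
    and a3: "\<And>x. a (a (a x)) = x" and b3: "\<And>x. b (b (b x)) = x"
    and ab3: "\<And>x. a (b (a (b (a (b x))))) = x"
  shows "\<exists>U. subspace U \<and> a ` U \<subseteq> U \<and> b ` U \<subseteq> U \<and> U \<noteq> {0} \<and> U \<noteq> UNIV"
proof (cases "(\<forall>v. a v = v) \<or> (\<forall>v. b v = v) \<or> (\<forall>v. a (b v) = v)")
  case True
  then show ?thesis by (rule order3_pair_reducible_of_trivial[OF la lb a3 b3])
next
  case nontrivial: False
  define c where "c = (\<lambda>v. b (b (a (a v))))"
  have lc: "linear c" unfolding c_def by (rule linear_compose'[OF lb linear_compose'[OF lb linear_compose'[OF la la]]])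
  have abc: "a (b (c v)) = v" for v by (simp add: c_def a3 b3)
  have c3: "c (c (c v)) = v" for v using ab3[of "c (c (c v))"] by (simp add: abc)
  have bc: "b (c v) = a (a v)" and ca: "c (a v) = b (b v)" for v by (simp_all add: c_def a3 b3)
  have fixed_c: "c v = v \<longleftrightarrow> a (b v) = v" for v
    using abc[of v] ca[of "b v"] b3[of v] by auto
  consider "dim {v. a v = v} \<ge> 2" | "dim {v. b v = v} \<ge> 2" | "dim {v. a (b v) = v} \<ge> 2"
    | "dim {v. a v = v} = 0" "dim {v. b v = v} = 0" "dim {v. a (b v) = v} = 0"
    using order3_dim_fixed_ne_1[OF la a3] order3_dim_fixed_ne_1[OF lb b3]
      order3_dim_fixed_ne_1[OF linear_compose'[OF la lb] ab3] by linarith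
  then show ?thesis
  proof cases
    case 1
    then show ?thesis using order3_pair_reducible_of_dim_fixed_ge_2[OF la lb a3 b3 ab3] nontrivial by blast
  next
    case 2
    have "b (c (b (c (b (c v))))) = v" for v by (simp add: bc a3)
    then obtain U where U: "subspace U" "b ` U \<subseteq> U" "c ` U \<subseteq> U" "U \<noteq> {0}" "U \<noteq> UNIV"
      using order3_pair_reducible_of_dim_fixed_ge_2[OF lb lc b3 c3] 2 nontrivial by blast
    have "a v = b (c (b (c v)))" for v by (simp add: bc a3)
    then have "a ` U \<subseteq> U" using U(2,3) by (auto simp: image_subset_iff)
    then show ?thesis using U by blast
  next
    case 3
    have "c (a (c (a (c (a v))))) = v" for v by (simp add: ca b3)
    moreover have "\<exists>v. c v \<noteq> v" using nontrivial fixed_c by blast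
    moreover have "dim {v. c v = v} \<ge> 2" using 3 fixed_c by simp
    ultimately obtain U where U: "subspace U" "c ` U \<subseteq> U" "a ` U \<subseteq> U" "U \<noteq> {0}" "U \<noteq> UNIV"
      using order3_pair_reducible_of_dim_fixed_ge_2[OF lc la c3 a3] by blast
    have "b v = c (a (c (a v)))" for v by (simp add: ca b3)
    then have "b ` U \<subseteq> U" using U(2,3) by (auto simp: image_subset_iff)
    then show ?thesis using U by blast
  next
    case 4
    then show ?thesis using order3_pair_fixed_point_free_reducible[OF la lb a3 b3 ab3] by auto
  qed
qed

section \<open>Semisimplicity\<close>

definition semisimple_on :: "real^'n^'n \<Rightarrow> real^'n^'n \<Rightarrow> (real^'n) set \<Rightarrow> bool" where
  "semisimple_on A B S \<longleftrightarrow> (\<forall>U. invariant_subspace A B U \<and> U \<subseteq> S \<longrightarrow>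
     (\<exists>W. invariant_subspace A B W \<and> W \<subseteq> S \<and> U \<inter> W = {0} \<and> {u + w | u w. u \<in> U \<and> w \<in> W} = S))"

lemma invariant_subspace_sums:
  assumes "invariant_subspace A B X" "invariant_subspace A B Y"
  shows "invariant_subspace A B {x + y | x y. x \<in> X \<and> y \<in> Y}"
proof -
  have s: "subspace {x + y | x y. x \<in> X \<and> y \<in> Y}"
    using assms by (intro subspace_sums) (auto simp: invariant_subspace_def)
  have "M *v (x + y) \<in> {x + y | x y. x \<in> X \<and> y \<in> Y}"
    if "x \<in> X" "y \<in> Y" "(\<lambda>v. M *v v) ` X \<subseteq> X" "(\<lambda>v. M *v v) ` Y \<subseteq> Y" for M x y
  proof -
    have "M *v (x + y) = M *v x + M *v y" by (simp add: matrix_vector_right_distrib)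
    moreover have "M *v x \<in> X" "M *v y \<in> Y" using that by auto
    ultimately show ?thesis by blast
  qed
  then show ?thesis using s assms unfolding invariant_subspace_def by blast
qed

lemma invariant_subspace_Int:
  assumes "invariant_subspace A B X" "invariant_subspace A B Y"
  shows "invariant_subspace A B (X \<inter> Y)"
  using assms unfolding invariant_subspace_def by (auto simp: subspace_inter)

lemma invariant_subspace_zero: "invariant_subspace A B {0}"
  unfolding invariant_subspace_def by (auto simp: subspace_def)

lemma semisimple_on_invariant_subspace:
  assumes ss: "semisimple_rep A B" and S: "invariant_subspace A B S"
  shows "semisimple_on A B S"
  unfolding semisimple_on_def
proof (intro allI impI)
  fix U assume U: "invariant_subspace A B U \<and> U \<subseteq> S"
  obtain C where C: "invariant_subspace A B C" "U \<inter> C = {0}" "{u + w | u w. u \<in> U \<and> w \<in> C} = UNIV"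
    using ss[unfolded semisimple_rep_def, rule_format, OF conjunct1[OF U]] by blast
  define W where "W = C \<inter> S"
  have iW: "invariant_subspace A B W" using C(1) S unfolding W_def invariant_subspace_def
    by (auto simp: subspace_inter)
  have "0 \<in> U" "0 \<in> W" using U iW by (auto simp: invariant_subspace_def subspace_0)
  then have UW: "U \<inter> W = {0}" using C(2) by (auto simp: W_def)
  have "{u + w | u w. u \<in> U \<and> w \<in> W} = S"
  proof
    show "{u + w | u w. u \<in> U \<and> w \<in> W} \<subseteq> S"
      using U S by (auto simp: W_def invariant_subspace_def intro: subspace_add)
    show "S \<subseteq> {u + w | u w. u \<in> U \<and> w \<in> W}"
    proof
      fix s assume s: "s \<in> S"
      obtain u c where uc: "s = u + c" "u \<in> U" "c \<in> C" using C(3) by blast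
      have sS: "subspace S" using S by (simp add: invariant_subspace_def)
      have uS: "u \<in> S" using uc U by auto
      have "c = s - u" using uc by simp
      then have "c \<in> S" using subspace_diff[OF sS s uS] by simp
      then show "s \<in> {u + w | u w. u \<in> U \<and> w \<in> W}" using uc by (auto simp: W_def)
    qed
  qed
  then show "\<exists>W. invariant_subspace A B W \<and> W \<subseteq> S \<and> U \<inter> W = {0} \<and> {u + w | u w. u \<in> U \<and> w \<in> W} = S"
    using iW UW by (intro exI[of _ W]) (auto simp: W_def)
qed

text \<open>On a subspace where the representation is trivial, orthogonal complements are invariant.\<close>
lemma semisimple_on_fixed_subspace:
  assumes sS: "subspace S" and fixed: "\<And>v. v \<in> S \<Longrightarrow> A *v v = v \<and> B *v v = v"
  shows "semisimple_on A B S"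
  unfolding semisimple_on_def
proof (intro allI impI)
  fix U assume U: "invariant_subspace A B U \<and> U \<subseteq> S"
  define W where "W = {y \<in> S. \<forall>x \<in> U. orthogonal x y}"
  have "subspace W" unfolding W_def using sS by (auto simp: subspace_def orthogonal_clauses)
  then have iW: "invariant_subspace A B W" using fixed by (auto simp: invariant_subspace_def W_def)
  have UW: "U \<inter> W = {0}"
    using U iW by (auto simp: W_def orthogonal_def invariant_subspace_def subspace_0)
  have "S \<subseteq> {u + w | u w. u \<in> U \<and> w \<in> W}"
  proof
    fix s assume s: "s \<in> S"
    obtain y z where yz: "s = y + z" "y \<in> span U" "\<And>w. w \<in> span U \<Longrightarrow> orthogonal z w"
      using orthogonal_subspace_decomp_exists[of U s] by metis
    have "subspace U" using U by (simp add: invariant_subspace_def)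
    then have yU: "y \<in> U" using yz(2) by (metis span_eq_iff)
    have "z = s - y" using yz by simp
    then have "z \<in> S" using s yU U sS by (auto intro: subspace_diff)
    then have "z \<in> W" using yz(3) yU unfolding W_def by (auto simp: orthogonal_commute span_base)
    then show "s \<in> {u + w | u w. u \<in> U \<and> w \<in> W}" using yz(1) yU by blast
  qed
  moreover have "{u + w | u w. u \<in> U \<and> w \<in> W} \<subseteq> S"
    using U sS by (auto simp: W_def intro: subspace_add)
  ultimately show "\<exists>W. invariant_subspace A B W \<and> W \<subseteq> S \<and> U \<inter> W = {0} \<and> {u + w | u w. u \<in> U \<and> w \<in> W} = S"
    using iW UW by (intro exI[of _ W]) (auto simp: W_def)
qed

lemma linear_image_sums:
  assumes "linear f"
  shows "f ` {u + w | u w. u \<in> U \<and> w \<in> W} = {u + w | u w. u \<in> f ` U \<and> w \<in> f ` W}"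
proof (intro equalityI subsetI)
  fix x assume "x \<in> f ` {u + w | u w. u \<in> U \<and> w \<in> W}"
  then obtain u w where "x = f (u + w)" "u \<in> U" "w \<in> W" by blast
  then show "x \<in> {u + w | u w. u \<in> f ` U \<and> w \<in> f ` W}" using linear_add[OF assms] by blast
next
  fix x assume "x \<in> {u + w | u w. u \<in> f ` U \<and> w \<in> f ` W}"
  then obtain u w where "x = f u + f w" "u \<in> U" "w \<in> W" by blast
  then have "x = f (u + w)" "u + w \<in> {u + w | u w. u \<in> U \<and> w \<in> W}" using linear_add[OF assms] by auto
  then show "x \<in> f ` {u + w | u w. u \<in> U \<and> w \<in> W}" by blast
qed

context
  fixes \<iota> :: "real^'m \<Rightarrow> real^'n" and A B :: "real^'n^'n" and A' B' :: "real^'m^'m"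
  assumes li: "linear \<iota>" and ii: "inj \<iota>"
    and iA: "\<And>x. A *v \<iota> x = \<iota> (A' *v x)" and iB: "\<And>x. B *v \<iota> x = \<iota> (B' *v x)"
begin

lemma invariant_subspace_intertwining_image:
  "invariant_subspace A' B' U' \<Longrightarrow> invariant_subspace A B (\<iota> ` U')"
  unfolding invariant_subspace_def by (auto simp: iA iB linear_subspace_image[OF li] image_subset_iff)

lemma invariant_subspace_intertwining_vimage:
  assumes "invariant_subspace A B U"
  shows "invariant_subspace A' B' (\<iota> -` U)"
proof -
  have "subspace (\<iota> -` U)" using assms li
    by (auto simp: invariant_subspace_def subspace_def linear_add linear_scale linear_0)
  then show ?thesis using assms unfolding invariant_subspace_def
    by (auto simp: iA[symmetric] iB[symmetric] image_subset_iff)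
qed

lemma intertwining_image_zero: "\<iota> ` {0} = {0}"
  by (simp add: linear_0[OF li])

lemma semisimple_on_range_iff: "semisimple_on A B (range \<iota>) \<longleftrightarrow> semisimple_rep A' B'"
proof
  assume ss: "semisimple_on A B (range \<iota>)"
  show "semisimple_rep A' B'" unfolding semisimple_rep_def
  proof (intro allI impI)
    fix U' assume U': "invariant_subspace A' B' U'"
    obtain W where W: "invariant_subspace A B W" "W \<subseteq> range \<iota>" "\<iota> ` U' \<inter> W = {0}"
      "{u + w | u w. u \<in> \<iota> ` U' \<and> w \<in> W} = range \<iota>"
      using ss[unfolded semisimple_on_def, rule_format,
          OF conjI[OF invariant_subspace_intertwining_image[OF U'] image_mono[OF subset_UNIV]]]
      by blast
    have W': "\<iota> ` (\<iota> -` W) = W" using W(2) by blast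
    have "\<iota> ` (U' \<inter> \<iota> -` W) = \<iota> ` {0}"
      by (simp only: image_Int[OF ii] W' W(3) intertwining_image_zero)
    moreover have "\<iota> ` {u + w | u w. u \<in> U' \<and> w \<in> \<iota> -` W} = \<iota> ` UNIV"
      by (simp only: linear_image_sums[OF li] W' W(4))
    ultimately show "\<exists>W. invariant_subspace A' B' W \<and> U' \<inter> W = {0} \<and> {u + w | u w. u \<in> U' \<and> w \<in> W} = UNIV"
      using invariant_subspace_intertwining_vimage[OF W(1)] by (auto simp only: inj_image_eq_iff[OF ii])
  qed
next
  assume ss: "semisimple_rep A' B'"
  show "semisimple_on A B (range \<iota>)" unfolding semisimple_on_def
  proof (intro allI impI)
    fix U assume U: "invariant_subspace A B U \<and> U \<subseteq> range \<iota>"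
    obtain W' where W': "invariant_subspace A' B' W'" "\<iota> -` U \<inter> W' = {0}"
      "{u + w | u w. u \<in> \<iota> -` U \<and> w \<in> W'} = UNIV"
      using ss[unfolded semisimple_rep_def, rule_format,
          OF invariant_subspace_intertwining_vimage[OF conjunct1[OF U]]]
      by blast
    have U': "\<iota> ` (\<iota> -` U) = U" using U by blast
    have "U \<inter> \<iota> ` W' = {0}"
      using arg_cong[where f="image \<iota>", OF W'(2)] by (simp only: image_Int[OF ii] U' intertwining_image_zero)
    moreover have "{u + w | u w. u \<in> U \<and> w \<in> \<iota> ` W'} = range \<iota>"
      using arg_cong[where f="image \<iota>", OF W'(3)] by (simp only: linear_image_sums[OF li] U')
    ultimately show "\<exists>W. invariant_subspace A B W \<and> W \<subseteq> range \<iota> \<and> U \<inter> W = {0} \<and>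
        {u + w | u w. u \<in> U \<and> w \<in> W} = range \<iota>"
      using invariant_subspace_intertwining_image[OF W'(1)] by blast
  qed
qed

end

text \<open>By maximality of \<open>W\<close>, an invariant complement of \<open>(U + W) \<inter> V\<close> in \<open>V\<close> can be added to \<open>W\<close>
  only if it is zero.\<close>
lemma maximal_disjoint_invariant_absorbs:
  fixes A B :: "real^'n^'n"
  assumes iU: "invariant_subspace A B U" and iW: "invariant_subspace A B W" and UW: "U \<inter> W = {0}"
    and maximal: "\<And>W'. invariant_subspace A B W' \<Longrightarrow> U \<inter> W' = {0} \<Longrightarrow> dim W' \<le> dim W"
    and iV: "invariant_subspace A B V" and sV: "semisimple_on A B V"
  shows "V \<subseteq> {u + w | u w. u \<in> U \<and> w \<in> W}"
proof -
  define S where "S = {u + w | u w. u \<in> U \<and> w \<in> W}"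
  have iS: "invariant_subspace A B S" unfolding S_def by (rule invariant_subspace_sums[OF iU iW])
  have sU: "subspace U" and sW: "subspace W" using iU iW by (simp_all add: invariant_subspace_def)
  define D where "D = S \<inter> V"
  have iD: "invariant_subspace A B D" unfolding D_def by (rule invariant_subspace_Int[OF iS iV])
  obtain C where C: "invariant_subspace A B C" "C \<subseteq> V" "D \<inter> C = {0}" "{d + c | d c. d \<in> D \<and> c \<in> C} = V"
    using sV[unfolded semisimple_on_def, rule_format, OF conjI[OF iD]] by (auto simp: D_def)
  have sC: "subspace C" using C(1) by (simp add: invariant_subspace_def)
  define W' where "W' = {w + c | w c. w \<in> W \<and> c \<in> C}"
  have iW': "invariant_subspace A B W'" unfolding W'_def by (rule invariant_subspace_sums[OF iW C(1)])
  have "x = 0" if "x \<in> U" "x \<in> W'" for x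
  proof -
    obtain w c where wc: "x = w + c" "w \<in> W" "c \<in> C" using \<open>x \<in> W'\<close> by (auto simp: W'_def)
    have "c = x + (- w)" "- w \<in> W" using wc sW by (simp_all add: subspace_neg)
    then have "c \<in> D \<inter> C" using that(1) wc(3) C(2) unfolding D_def S_def by blast
    then have "x \<in> U \<inter> W" using C(3) wc that(1) by auto
    then show "x = 0" using UW by auto
  qed
  then have "U \<inter> W' = {0}" using iU iW' by (auto simp: invariant_subspace_def subspace_0)
  then have "dim W' \<le> dim W" using maximal[OF iW'] by simp
  moreover have "W \<subseteq> W'" using subspace_0[OF sC] unfolding W'_def by force
  ultimately have "span W = span W'" by (intro dim_eq_span)
  then have "W' = W" using sW iW' by (metis invariant_subspace_def span_eq_iff)
  then have "C \<subseteq> W" using subspace_0[OF sW] unfolding W'_def by force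
  then have "C \<subseteq> S" using subspace_0[OF sU] unfolding S_def by force
  then have "C \<subseteq> {0}" using C(2,3) by (auto simp: D_def)
  have "V \<subseteq> S"
  proof
    fix v assume "v \<in> V"
    then obtain d c where "v = d + c" "d \<in> D" "c \<in> C" using C(4) by blast
    then show "v \<in> S" using \<open>C \<subseteq> {0}\<close> by (auto simp: D_def)
  qed
  then show ?thesis by (simp add: S_def)
qed

lemma semisimple_rep_of_semisimple_summands:
  fixes A B :: "real^'n^'n"
  assumes i1: "invariant_subspace A B V1" and i2: "invariant_subspace A B V2"
    and sum: "{x + y | x y. x \<in> V1 \<and> y \<in> V2} = UNIV"
    and s1: "semisimple_on A B V1" and s2: "semisimple_on A B V2"
  shows "semisimple_rep A B"
  unfolding semisimple_rep_def
proof (intro allI impI)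
  fix U assume iU: "invariant_subspace A B U"
  define P where "P = (\<lambda>W. invariant_subspace A B W \<and> U \<inter> W = {0})"
  have P0: "P {0}" unfolding P_def using invariant_subspace_zero iU by (auto simp: invariant_subspace_def subspace_0)
  have "\<forall>W. P W \<longrightarrow> dim W < CARD('n) + 1"
    using dim_subset_UNIV_cart[where 'n='n] by (metis less_Suc_eq_le Suc_eq_plus1)
  then obtain W where PW: "P W" and maxW: "\<And>W'. P W' \<Longrightarrow> dim W' \<le> dim W"
    using ex_has_greatest_nat[of P "{0}" dim "CARD('n) + 1", OF P0] by blast
  have iW: "invariant_subspace A B W" and UW: "U \<inter> W = {0}" using PW by (auto simp: P_def)
  have maximal: "dim W' \<le> dim W" if "invariant_subspace A B W'" "U \<inter> W' = {0}" for W'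
    using maxW that by (simp add: P_def)
  have absorbs: "V \<subseteq> {u + w | u w. u \<in> U \<and> w \<in> W}"
    if "invariant_subspace A B V" "semisimple_on A B V" for V
    by (rule maximal_disjoint_invariant_absorbs[OF iU iW UW _ that]) (fact maximal)
  define S where "S = {u + w | u w. u \<in> U \<and> w \<in> W}"
  have sS: "subspace S" using invariant_subspace_sums[OF iU iW] by (simp add: invariant_subspace_def S_def)
  have V1: "V1 \<subseteq> S" and V2: "V2 \<subseteq> S" using absorbs[OF i1 s1] absorbs[OF i2 s2] by (simp_all add: S_def)
  have "z \<in> S" for z
  proof -
    obtain x y where "z = x + y" "x \<in> V1" "y \<in> V2" using sum by blast
    then show ?thesis using V1 V2 sS by (auto intro: subspace_add)
  qed
  then have "{u + w | u w. u \<in> U \<and> w \<in> W} = UNIV" by (auto simp: S_def)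
  then show "\<exists>W. invariant_subspace A B W \<and> U \<inter> W = {0} \<and> {u + w |u w. u \<in> U \<and> w \<in> W} = UNIV"
    using iW UW by blast
qed

lemma semisimple_rep_restrict:
  fixes A B :: "real^'n^'n" and A' B' :: "real^'m^'m" and f :: "real^'m \<Rightarrow> real^'n"
  assumes ss: "semisimple_rep A B" and iW: "invariant_subspace A B W"
    and lf: "linear f" and inj: "inj f" and rf: "range f = W"
    and fA: "\<And>x. A *v f x = f (A' *v x)" and fB: "\<And>x. B *v f x = f (B' *v x)"
  shows "semisimple_rep A' B'"
  using semisimple_on_invariant_subspace[OF ss iW] semisimple_on_range_iff[OF lf inj fA fB] rf by simp

section \<open>Block matrices\<close>

lemma vector_4 [simp]:
 "(vector [a,b,c,d] ::('a::zero)^4)$1 = a"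
 "(vector [a,b,c,d] ::('a::zero)^4)$2 = b"
 "(vector [a,b,c,d] ::('a::zero)^4)$3 = c"
 "(vector [a,b,c,d] ::('a::zero)^4)$4 = d"
  unfolding vector_def by simp_all

definition incl3 :: "real^3 \<Rightarrow> real^4" where "incl3 x = vector [x$1, x$2, x$3, 0]"
definition proj3 :: "real^4 \<Rightarrow> real^3" where "proj3 y = vector [y$1, y$2, y$3]"
definition unit4 :: "real^4" where "unit4 = vector [0, 0, 0, 1]"
definition incl12 :: "real^2 \<Rightarrow> real^4" where "incl12 x = vector [x$1, x$2, 0, 0]"
definition incl34 :: "real^2 \<Rightarrow> real^4" where "incl34 x = vector [0, 0, x$1, x$2]"
definition proj12 :: "real^4 \<Rightarrow> real^2" where "proj12 y = vector [y$1, y$2]"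
definition proj34 :: "real^4 \<Rightarrow> real^2" where "proj34 y = vector [y$3, y$4]"

lemma embed_i_mult_vec: "embed_i X *v y = incl3 (X *v proj3 y) + (y$4) *\<^sub>R unit4"
  unfolding vec_eq_iff forall_4
  by (simp add: embed_i_def incl3_def proj3_def unit4_def matrix_vector_mult_def sum_4 sum_3)

lemma embed_j_mult_vec: "embed_j X Y *v y = incl12 (X *v proj12 y) + incl34 (Y *v proj34 y)"
  unfolding vec_eq_iff forall_4
  by (simp add: embed_j_def incl12_def incl34_def proj12_def proj34_def matrix_vector_mult_def sum_4 sum_2)

lemma linear_proj3: "linear proj3"
  by (rule linearI) (simp_all add: vec_eq_iff forall_3 proj3_def)
lemma linear_proj12: "linear proj12"
  by (rule linearI) (simp_all add: vec_eq_iff forall_2 proj12_def)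
lemma linear_proj34: "linear proj34"
  by (rule linearI) (simp_all add: vec_eq_iff forall_2 proj34_def)
lemma linear_incl3: "linear incl3"
  by (rule linearI) (simp_all add: vec_eq_iff forall_4 incl3_def)
lemma linear_incl12: "linear incl12"
  by (rule linearI) (simp_all add: vec_eq_iff forall_4 incl12_def)
lemma linear_incl34: "linear incl34"
  by (rule linearI) (simp_all add: vec_eq_iff forall_4 incl34_def)

lemma proj3_incl3_add [simp]: "proj3 (incl3 x + t *\<^sub>R unit4) = x" "(incl3 x + t *\<^sub>R unit4) $ 4 = t"
  by (simp_all add: vec_eq_iff forall_3 proj3_def incl3_def unit4_def)
lemma proj_incl12_add [simp]: "proj12 (incl12 x + incl34 z) = x" "proj34 (incl12 x + incl34 z) = z"
  by (simp_all add: vec_eq_iff forall_2 proj12_def proj34_def incl12_def incl34_def)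
lemma incl3_proj3: "incl3 (proj3 y) + (y$4) *\<^sub>R unit4 = y"
  by (simp add: vec_eq_iff forall_4 proj3_def incl3_def unit4_def)
lemma incl12_proj12: "incl12 (proj12 y) + incl34 (proj34 y) = y"
  by (simp add: vec_eq_iff forall_4 proj12_def proj34_def incl12_def incl34_def)
lemma proj3_incl3 [simp]: "proj3 (incl3 x) = x" by (simp add: vec_eq_iff forall_3 proj3_def incl3_def)
lemma proj12_incl12 [simp]: "proj12 (incl12 x) = x" by (simp add: vec_eq_iff forall_2 proj12_def incl12_def)
lemma proj34_incl34 [simp]: "proj34 (incl34 x) = x" by (simp add: vec_eq_iff forall_2 proj34_def incl34_def)

definition diag_last :: "real \<Rightarrow> real^4^4" where
  "diag_last c = (\<chi> i j. if i = j then (if i = 4 then c else 1) else 0)"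

lemma diag_last_mult_vec: "proj3 (diag_last c *v y) = proj3 y" "(diag_last c *v y)$4 = c * y$4"
  "proj12 (diag_last c *v y) = proj12 y" "proj34 (diag_last c *v y) = vector [y$3, c * y$4]"
  by (simp_all add: vec_eq_iff forall_3 forall_2 proj3_def proj12_def proj34_def diag_last_def matrix_vector_mult_def sum_4)

lemma det_diag_last: "det (diag_last c) = c"
proof -
  have "det (diag_last c) = prod (\<lambda>i. diag_last c $ i $ i) UNIV" by (rule det_diagonal) (simp add: diag_last_def)
  also have "\<dots> = prod (\<lambda>i. if i = 4 then c else 1) (UNIV::4 set)" by (simp add: diag_last_def)
  also have "\<dots> = c" by (subst prod.delta) auto
  finally show ?thesis .
qed

lemma matrix_cube_mult_vec: "(M ** M ** M) *v x = M *v (M *v (M *v x))"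
  by (simp add: matrix_vector_mul_assoc matrix_mul_assoc)
lemma matrix_mul_cube_mult_vec: "((M ** N) ** (M ** N) ** (M ** N)) *v x = M *v (N *v (M *v (N *v (M *v (N *v x)))))"
  by (simp add: matrix_vector_mul_assoc matrix_mul_assoc)

lemma rep_Gamma_SL_cubes:
  assumes "rep_Gamma_SL A B"
  shows "\<And>x. A *v (A *v (A *v x)) = x" "\<And>x. B *v (B *v (B *v x)) = x"
    "\<And>x. A *v (B *v (A *v (B *v (A *v (B *v x))))) = x"
  using assms unfolding rep_Gamma_SL_def
  by (metis matrix_cube_mult_vec matrix_vector_mul_lid, metis matrix_cube_mult_vec matrix_vector_mul_lid,
      metis matrix_mul_cube_mult_vec matrix_vector_mul_lid)

lemma rep_Gamma_SL_reducible:
  fixes A B :: "real^4^4"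
  assumes "rep_Gamma_SL A B"
  shows "\<exists>U. invariant_subspace A B U \<and> U \<noteq> {0} \<and> U \<noteq> UNIV"
proof -
  obtain U where "subspace U" "(\<lambda>v. A *v v) ` U \<subseteq> U" "(\<lambda>v. B *v v) ` U \<subseteq> U" "U \<noteq> {0}" "U \<noteq> UNIV"
    using order3_pair_reducible[OF matrix_vector_mul_linear matrix_vector_mul_linear rep_Gamma_SL_cubes[OF assms]] by blast
  then show ?thesis unfolding invariant_subspace_def by blast
qed

lemma det_eq_1_of_cube_eq_1:
  assumes "M ** M ** M = mat 1"
  shows "det (M::real^'n^'n) = 1"
proof -
  have "det M * det M * det M = 1" using assms by (metis det_I det_mul)
  then show ?thesis by (simp add: real_cube_eq_one_iff)
qed

lemma rep_Gamma_SL_of_cubes: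
  assumes "\<And>x. A *v (A *v (A *v x)) = x" "\<And>x. B *v (B *v (B *v x)) = x"
    and "\<And>x. A *v (B *v (A *v (B *v (A *v (B *v x))))) = x"
  shows "rep_Gamma_SL A B"
proof -
  have "A ** A ** A = mat 1" "B ** B ** B = mat 1"
    using assms(1,2) by (simp_all add: matrix_eq matrix_cube_mult_vec)
  moreover have "(A ** B) ** (A ** B) ** (A ** B) = mat 1"
    using assms(3) by (simp add: matrix_eq matrix_mul_cube_mult_vec)
  ultimately show ?thesis by (simp add: rep_Gamma_SL_def det_eq_1_of_cube_eq_1)
qed

lemma rep_Gamma_SL_intertwined:
  fixes \<iota> :: "real^'m \<Rightarrow> real^'n" and A B :: "real^'n^'n" and A' B' :: "real^'m^'m"
  assumes ii: "inj \<iota>" and iA: "\<And>x. A *v \<iota> x = \<iota> (A' *v x)" and iB: "\<And>x. B *v \<iota> x = \<iota> (B' *v x)"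
    and r: "rep_Gamma_SL A B"
  shows "rep_Gamma_SL A' B'"
proof (rule rep_Gamma_SL_of_cubes)
  note cubes = rep_Gamma_SL_cubes[OF r]
  show "A' *v (A' *v (A' *v x)) = x" for x
    using cubes(1)[of "\<iota> x"] by (simp add: iA inj_eq[OF ii])
  show "B' *v (B' *v (B' *v x)) = x" for x
    using cubes(2)[of "\<iota> x"] by (simp add: iB inj_eq[OF ii])
  show "A' *v (B' *v (A' *v (B' *v (A' *v (B' *v x))))) = x" for x
    using cubes(3)[of "\<iota> x"] by (simp add: iA iB inj_eq[OF ii])
qed

lemma invertible_matrix_of_linear_inj:
  fixes h :: "real^'n \<Rightarrow> real^'n"
  assumes lh: "linear h" and ih: "inj h"
  shows "\<exists>R. R ** matrix h = mat 1 \<and> matrix h ** R = mat 1"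
proof -
  have "inj ((*v) (matrix h))" using ih lh by (metis matrix_vector_mul(2))
  then obtain R where "R ** matrix h = mat 1" using matrix_left_invertible_injective by blast
  then show ?thesis using matrix_left_right_inverse by blast
qed

lemma block_coord_zero [simp]: "(incl3 x) $ 4 = 0" "proj3 unit4 = 0" "proj34 (incl12 y) = 0" "proj12 (incl34 z) = 0" "unit4 $ 4 = 1"
  by (simp_all add: vec_eq_iff forall_3 forall_2 incl3_def proj3_def unit4_def proj12_def proj34_def incl12_def incl34_def)

lemma incl_zero [simp]: "incl3 0 = 0" "incl12 0 = 0" "incl34 0 = 0"
  by (simp_all add: vec_eq_iff forall_4 incl3_def incl12_def incl34_def)

lemma proj3_scale_unit4 [simp]: "proj3 (t *\<^sub>R unit4) = 0" "(t *\<^sub>R unit4) $ 4 = t"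
  by (simp_all add: vec_eq_iff forall_3 proj3_def unit4_def)

lemma embed_i_incl3: "embed_i X *v incl3 x = incl3 (X *v x)"
  by (simp add: embed_i_mult_vec)
lemma embed_i_unit4: "embed_i X *v (t *\<^sub>R unit4) = t *\<^sub>R unit4"
  by (simp add: embed_i_mult_vec)
lemma embed_j_incl12: "embed_j X Y *v incl12 x = incl12 (X *v x)"
  by (simp add: embed_j_mult_vec)
lemma embed_j_incl34: "embed_j X Y *v incl34 x = incl34 (Y *v x)"
  by (simp add: embed_j_mult_vec)

lemma embed_i_matrix_mul: "embed_i X ** embed_i Y = embed_i (X ** Y)"
  unfolding matrix_eq
  by (simp add: matrix_vector_mul_assoc[symmetric] embed_i_mult_vec)

lemma embed_i_mat_1: "embed_i (mat 1) = mat 1"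
  unfolding matrix_eq by (simp add: embed_i_mult_vec incl3_proj3)

lemma embed_j_matrix_mul: "embed_j X1 Y1 ** embed_j X2 Y2 = embed_j (X1 ** X2) (Y1 ** Y2)"
  unfolding matrix_eq
  by (simp add: matrix_vector_mul_assoc[symmetric] embed_j_mult_vec)

lemma embed_j_mat_1: "embed_j (mat 1) (mat 1) = mat 1"
  unfolding matrix_eq by (simp add: embed_j_mult_vec incl12_proj12)

lemma rep_Gamma_SL_embed_i:
  assumes "rep_Gamma_SL A' B'"
  shows "rep_Gamma_SL (embed_i A') (embed_i B')"
proof -
  have "embed_i A' ** embed_i A' ** embed_i A' = mat 1"
       "embed_i B' ** embed_i B' ** embed_i B' = mat 1"
       "(embed_i A' ** embed_i B') ** (embed_i A' ** embed_i B') ** (embed_i A' ** embed_i B') = mat 1"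
    using assms unfolding rep_Gamma_SL_def by (simp_all add: embed_i_matrix_mul embed_i_mat_1)
  then show ?thesis unfolding rep_Gamma_SL_def using det_eq_1_of_cube_eq_1 by blast
qed

lemma rep_Gamma_SL_embed_j:
  assumes "rep_Gamma_SL A1 B1" "rep_Gamma_SL A2 B2"
  shows "rep_Gamma_SL (embed_j A1 A2) (embed_j B1 B2)"
proof -
  have "embed_j A1 A2 ** embed_j A1 A2 ** embed_j A1 A2 = mat 1"
       "embed_j B1 B2 ** embed_j B1 B2 ** embed_j B1 B2 = mat 1"
       "(embed_j A1 A2 ** embed_j B1 B2) ** (embed_j A1 A2 ** embed_j B1 B2) ** (embed_j A1 A2 ** embed_j B1 B2) = mat 1"
    using assms unfolding rep_Gamma_SL_def by (simp_all add: embed_j_matrix_mul embed_j_mat_1)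
  then show ?thesis unfolding rep_Gamma_SL_def using det_eq_1_of_cube_eq_1 by blast
qed

lemma inj_incl: "inj incl3" "inj incl12" "inj incl34"
  by (metis injI proj3_incl3, metis injI proj12_incl12, metis injI proj34_incl34)

lemma semisimple_rep_embed_i:
  assumes "semisimple_rep A' B'"
  shows "semisimple_rep (embed_i A') (embed_i B')"
proof -
  let ?A = "embed_i A'" and ?B = "embed_i B'"
  define V2 where "V2 = range (\<lambda>t::real. t *\<^sub>R unit4)"
  have sV2: "subspace V2" unfolding V2_def
    by (rule linear_subspace_image[OF _ subspace_UNIV]) (rule linearI, simp_all add: scaleR_add_left)
  have i1: "invariant_subspace ?A ?B (range incl3)"
    unfolding invariant_subspace_def
    by (auto simp: linear_subspace_image[OF linear_incl3] embed_i_incl3)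
  have i2: "invariant_subspace ?A ?B V2"
    unfolding invariant_subspace_def V2_def using sV2[unfolded V2_def]
    by (auto simp: embed_i_unit4)
  have sum: "{x + y | x y. x \<in> range incl3 \<and> y \<in> V2} = UNIV"
  proof -
    have "z \<in> {x + y | x y. x \<in> range incl3 \<and> y \<in> V2}" for z
      using incl3_proj3[of z] unfolding V2_def by (metis (mono_tags, lifting) mem_Collect_eq rangeI)
    then show ?thesis by blast
  qed
  have s1: "semisimple_on ?A ?B (range incl3)"
    using semisimple_on_range_iff[OF linear_incl3 inj_incl(1) embed_i_incl3 embed_i_incl3] assms by blast
  have s2: "semisimple_on ?A ?B V2"
    by (rule semisimple_on_fixed_subspace[OF sV2]) (auto simp: V2_def embed_i_unit4)
  show ?thesis by (rule semisimple_rep_of_semisimple_summands[OF i1 i2 sum s1 s2])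
qed

lemma semisimple_rep_embed_j:
  assumes "semisimple_rep A1 B1" "semisimple_rep A2 B2"
  shows "semisimple_rep (embed_j A1 A2) (embed_j B1 B2)"
proof -
  let ?A = "embed_j A1 A2" and ?B = "embed_j B1 B2"
  have i1: "invariant_subspace ?A ?B (range incl12)"
    unfolding invariant_subspace_def
    by (auto simp: linear_subspace_image[OF linear_incl12] embed_j_incl12)
  have i2: "invariant_subspace ?A ?B (range incl34)"
    unfolding invariant_subspace_def
    by (auto simp: linear_subspace_image[OF linear_incl34] embed_j_incl34)
  have sum: "{x + y | x y. x \<in> range incl12 \<and> y \<in> range incl34} = UNIV"
  proof -
    have "z \<in> {x + y | x y. x \<in> range incl12 \<and> y \<in> range incl34}" for z
      using incl12_proj12[of z] by (metis (mono_tags, lifting) mem_Collect_eq rangeI)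
    then show ?thesis by blast
  qed
  have s1: "semisimple_on ?A ?B (range incl12)"
    using semisimple_on_range_iff[OF linear_incl12 inj_incl(2) embed_j_incl12 embed_j_incl12] assms(1) by blast
  have s2: "semisimple_on ?A ?B (range incl34)"
    using semisimple_on_range_iff[OF linear_incl34 inj_incl(3) embed_j_incl34 embed_j_incl34] assms(2) by blast
  show ?thesis by (rule semisimple_rep_of_semisimple_summands[OF i1 i2 sum s1 s2])
qed

section \<open>Conjugation into block form\<close>

definition linear_iso_onto :: "(real^'m \<Rightarrow> real^'n) \<Rightarrow> (real^'n \<Rightarrow> real^'m) \<Rightarrow> (real^'n) set \<Rightarrow> bool" where
  "linear_iso_onto f g W \<longleftrightarrow> linear f \<and> linear g \<and> (\<forall>x. g (f x) = x) \<and> range f = W \<and> (\<forall>y\<in>W. f (g y) = y)"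

lemma linear_iso_onto_exists:
  fixes W :: "(real^'n) set"
  assumes "subspace W" and "dim W = CARD('m)"
  obtains f :: "real^'m \<Rightarrow> real^'n" and g where "linear_iso_onto f g W"
proof -
  have "dim (UNIV :: (real^'m) set) = dim W" using assms(2) by simp
  then obtain f :: "real^'m \<Rightarrow> real^'n" and g where "linear f" "linear g" "range f = W" "g ` W = UNIV"
    "\<And>x. g (f x) = x" "\<And>y. y \<in> W \<Longrightarrow> f (g y) = y"
    using isometries_subspaces[OF subspace_UNIV assms(1)] by (metis UNIV_I)
  then show ?thesis using that unfolding linear_iso_onto_def by blast
qed

lemma linear_iso_onto_inj:
  assumes "linear_iso_onto f g W"
  shows "inj f" and "f x = 0 \<Longrightarrow> x = 0"
proof -
  have gf: "g (f x) = x" for x using assms by (simp add: linear_iso_onto_def)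
  show "inj f" by (rule injI) (metis gf)
  show "x = 0" if "f x = 0"
    using gf[of x] that linear_0[of g] assms by (simp add: linear_iso_onto_def)
qed

lemma linear_iso_onto_restriction:
  assumes iso: "linear_iso_onto f g W" and MW: "\<And>y. y \<in> W \<Longrightarrow> M *v y \<in> W"
  shows "M *v f x = f (matrix (\<lambda>x. g (M *v f x)) *v x)"
proof -
  have lf: "linear f" and lg: "linear g" and fW: "f x \<in> W" and fg: "\<And>y. y \<in> W \<Longrightarrow> f (g y) = y"
    using iso by (auto simp: linear_iso_onto_def)
  have "linear (\<lambda>x. g (M *v f x))"
    by (rule linear_compose'[OF lg linear_compose'[OF matrix_vector_mul_linear lf]])
  then have "matrix (\<lambda>x. g (M *v f x)) *v x = g (M *v f x)" by (simp add: matrix_works)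
  then show ?thesis using fg[OF MW[OF fW]] by simp
qed

lemma linear_iso_onto_rescale:
  fixes f :: "real^2 \<Rightarrow> real^'n"
  assumes iso: "linear_iso_onto f g W" and c: "c \<noteq> 0"
  shows "linear_iso_onto (\<lambda>z::real^2. f (vector [z$1, c * z$2])) (\<lambda>w. vector [g w $ 1, g w $ 2 / c]) W"
proof -
  define s where "s z = (vector [z$1, c * z$2] :: real^2)" for z :: "real^2"
  define s' where "s' z = (vector [z$1, z$2 / c] :: real^2)" for z :: "real^2"
  have ls: "linear s" "linear s'" unfolding s_def s'_def
    by (rule linearI; simp add: vec_eq_iff forall_2 algebra_simps add_divide_distrib)+
  have ss': "s (s' z) = z" "s' (s z) = z" for z using c by (simp_all add: s_def s'_def vec_eq_iff forall_2)
  have lf: "linear f" and lg: "linear g" and gf: "\<And>x. g (f x) = x" and rf: "range f = W"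
    and fg: "\<And>y. y \<in> W \<Longrightarrow> f (g y) = y"
    using iso by (auto simp: linear_iso_onto_def)
  have "range (\<lambda>z. f (s z)) = range f"
  proof (intro equalityI subsetI)
    fix y assume "y \<in> range f"
    then obtain z where "y = f z" by blast
    then show "y \<in> range (\<lambda>z. f (s z))" using ss'(1)[of z] by (metis rangeI)
  qed auto
  then have "linear_iso_onto (\<lambda>z. f (s z)) (\<lambda>w. s' (g w)) W"
    using linear_compose'[OF lf ls(1)] linear_compose'[OF ls(2) lg] gf rf fg ss'
    by (simp add: linear_iso_onto_def)
  then show ?thesis by (simp add: s_def s'_def)
qed

lemma matrix_intertwines:
  fixes h :: "real^'m \<Rightarrow> real^'n"
  assumes "linear h" and "\<And>y. A *v h y = h (M *v y)"
  shows "A ** matrix h = matrix h ** M"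
  using assms by (simp add: matrix_eq matrix_vector_mul_assoc[symmetric] matrix_works)

lemma conj_SL_of_intertwiner:
  fixes Q R A B MA MB :: "real^'n^'n"
  assumes RQ: "R ** Q = mat 1" and QR: "Q ** R = mat 1" and dQ: "det Q = 1"
    and eA: "A ** Q = Q ** MA" and eB: "B ** Q = Q ** MB"
  shows "det R = 1 \<and> conj_SL R A = MA \<and> conj_SL R B = MB"
proof -
  have inv: "matrix_inv R = Q"
    unfolding matrix_inv_def
  proof (rule some_equality)
    show "R ** Q = mat 1 \<and> Q ** R = mat 1" using RQ QR by simp
  next
    fix X assume X: "R ** X = mat 1 \<and> X ** R = mat 1"
    have "X = (Q ** R) ** X" using QR by simp
    also have "\<dots> = Q ** (R ** X)" by (simp add: matrix_mul_assoc)
    also have "\<dots> = Q" using X by simp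
    finally show "X = Q" .
  qed
  have "det R * det Q = 1" using RQ by (metis det_I det_mul)
  then have dR: "det R = 1" using dQ by simp
  have "conj_SL R A = R ** (A ** Q)" unfolding conj_SL_def inv by (simp add: matrix_mul_assoc)
  also have "\<dots> = (R ** Q) ** MA" using eA by (simp add: matrix_mul_assoc)
  finally have 1: "conj_SL R A = MA" using RQ by simp
  have "conj_SL R B = R ** (B ** Q)" unfolding conj_SL_def inv by (simp add: matrix_mul_assoc)
  also have "\<dots> = (R ** Q) ** MB" using eB by (simp add: matrix_mul_assoc)
  finally have 2: "conj_SL R B = MB" using RQ by simp
  show ?thesis using dR 1 2 by simp
qed

lemma conj_SL_exists_of_intertwining:
  fixes h :: "real^'n \<Rightarrow> real^'n"
  assumes lh: "linear h" and ih: "inj h" and dh: "det (matrix h) = 1"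
    and hA: "\<And>y. A *v h y = h (MA *v y)" and hB: "\<And>y. B *v h y = h (MB *v y)"
  shows "\<exists>P. det P = 1 \<and> conj_SL P A = MA \<and> conj_SL P B = MB"
proof -
  obtain R where "R ** matrix h = mat 1" "matrix h ** R = mat 1"
    using invertible_matrix_of_linear_inj[OF lh ih] by blast
  then show ?thesis
    using conj_SL_of_intertwiner[OF _ _ dh matrix_intertwines[OF lh hA] matrix_intertwines[OF lh hB]] by blast
qed

lemma det_matrix_neq_0_of_inj:
  fixes h :: "real^'n \<Rightarrow> real^'n"
  assumes "linear h" "inj h"
  shows "det (matrix h) \<noteq> 0"
proof -
  obtain R where "R ** matrix h = mat 1" using invertible_matrix_of_linear_inj[OF assms] by blast
  then have "det R * det (matrix h) = 1" by (metis det_I det_mul)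
  then show ?thesis by auto
qed

lemma det_matrix_rescaled:
  fixes h h' :: "real^4 \<Rightarrow> real^4"
  assumes lh: "linear h" and h': "\<And>y. h' y = h (diag_last c *v y)"
  shows "det (matrix h') = det (matrix h) * c"
proof -
  have "h' = h \<circ> (\<lambda>y. diag_last c *v y)" using h' by auto
  then have "matrix h' = matrix h ** diag_last c"
    using matrix_compose[OF matrix_vector_mul_linear lh] by simp
  then show ?thesis by (simp add: det_mul det_diag_last)
qed

lemma inj_sum_of_disjoint_images:
  fixes p :: "'a::real_vector \<Rightarrow> 'b::real_vector" and q :: "'a \<Rightarrow> 'c::real_vector"
    and f :: "'b \<Rightarrow> 'd::real_vector" and g :: "'c \<Rightarrow> 'd"
  assumes lp: "linear p" and lq: "linear q" and pq: "\<And>y. p y = 0 \<Longrightarrow> q y = 0 \<Longrightarrow> y = 0"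
    and lf: "linear f" and lg: "linear g" and f0: "\<And>x. f x = 0 \<Longrightarrow> x = 0" and g0: "\<And>z. g z = 0 \<Longrightarrow> z = 0"
    and fV: "\<And>x. f x \<in> V" and gW: "\<And>z. g z \<in> W" and sW: "subspace W" and VW: "V \<inter> W = {0}"
  shows "inj (\<lambda>y. f (p y) + g (q y))"
proof -
  have lh: "linear (\<lambda>y. f (p y) + g (q y))"
    by (rule linear_compose_add[OF linear_compose'[OF lf lp] linear_compose'[OF lg lq]])
  have "y = 0" if "f (p y) + g (q y) = 0" for y
  proof -
    have "f (p y) = - g (q y)" using that by (simp add: eq_neg_iff_add_eq_0)
    moreover have "- g (q y) \<in> W" using gW sW by (simp add: subspace_neg)
    ultimately have "f (p y) \<in> V \<inter> W" using fV[of "p y"] by simp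
    then have "f (p y) = 0" using VW by blast
    then have "p y = 0" by (rule f0)
    moreover have "g (q y) = 0" using that \<open>f (p y) = 0\<close> by simp
    then have "q y = 0" by (rule g0)
    ultimately show "y = 0" by (rule pq)
  qed
  then show ?thesis using linear_inj_iff_eq_0[OF lh] by blast
qed

lemma order3_real_eigenvalue:
  fixes M :: "real^'n^'n"
  assumes M3: "\<And>x. M *v (M *v (M *v x)) = x" and v: "v \<noteq> 0" and Mv: "M *v v = k *\<^sub>R v"
  shows "k = 1"
proof -
  have "(k * k * k) *\<^sub>R v = 1 *\<^sub>R v" using M3[of v] Mv by (simp add: matrix_vector_mult_scaleR)
  then have "k * k * k = 1" using v by (metis scaleR_cancel_right)
  then show ?thesis by (simp add: real_cube_eq_one_iff)
qed

lemma rep_Gamma_SL_invariant_line_fixed: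
  fixes A B :: "real^'n^'n"
  assumes r: "rep_Gamma_SL A B" and iV: "invariant_subspace A B V" and dV: "dim V = 1" and v: "v \<in> V"
  shows "A *v v = v" "B *v v = v"
proof -
  have sV: "subspace V" using iV by (simp add: invariant_subspace_def)
  have line: "M *v v = v" if M3: "\<And>x. M *v (M *v (M *v x)) = x" and MV: "\<And>y. y \<in> V \<Longrightarrow> M *v y \<in> V" for M
  proof (cases "v = 0")
    case False
    have "span {v} = span V" using v dV False by (intro dim_eq_span) auto
    then have "V = span {v}" using sV by (metis span_eq_iff)
    then have "V = range (\<lambda>k. k *\<^sub>R v)" by (simp add: span_singleton)
    then obtain k where k: "M *v v = k *\<^sub>R v" using MV[OF v] by auto
    then show ?thesis using order3_real_eigenvalue[OF M3 False k] by simp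
  qed simp
  have "\<And>y. y \<in> V \<Longrightarrow> A *v y \<in> V" "\<And>y. y \<in> V \<Longrightarrow> B *v y \<in> V"
    using iV by (auto simp: invariant_subspace_def)
  then show "A *v v = v" "B *v v = v" using line rep_Gamma_SL_cubes(1,2)[OF r] by blast+
qed

lemma semisimple_split_small_summand:
  fixes A B :: "real^4^4"
  assumes r: "rep_Gamma_SL A B" and ss: "semisimple_rep A B"
  shows "\<exists>V W. invariant_subspace A B V \<and> invariant_subspace A B W \<and> V \<inter> W = {0} \<and>
     (dim V = 1 \<or> dim V = 2) \<and> dim V + dim W = 4"
proof -
  obtain U where U: "invariant_subspace A B U" "U \<noteq> {0}" "U \<noteq> UNIV"
    using rep_Gamma_SL_reducible[OF r] by blast
  obtain C where C: "invariant_subspace A B C" "U \<inter> C = {0}" "{u + w | u w. u \<in> U \<and> w \<in> C} = UNIV"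
    using ss[unfolded semisimple_rep_def, rule_format, OF U(1)] by blast
  have sU: "subspace U" and sC: "subspace C" using U(1) C(1) by (auto simp: invariant_subspace_def)
  have dims: "dim U + dim C = 4" using dim_sums_Int[OF sU sC] C(2,3) by simp
  have "dim U \<noteq> 0"
  proof
    assume "dim U = 0"
    then have "U \<subseteq> {0}" by simp
    then show False using U(2) subspace_0[OF sU] by blast
  qed
  have "dim C \<noteq> 0"
  proof
    assume "dim C = 0"
    then have "C \<subseteq> {0}" by simp
    then have "{u + w | u w. u \<in> U \<and> w \<in> C} \<subseteq> U" by auto
    then show False using C(3) U(3) by blast
  qed
  show ?thesis
  proof (cases "dim U \<le> 2")
    case True
    then have "dim U = 1 \<or> dim U = 2" using \<open>dim U \<noteq> 0\<close> by linarith
    then show ?thesis using U(1) C(1,2) dims by blast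
  next
    case False
    then have "dim C = 1 \<or> dim C = 2" using \<open>dim C \<noteq> 0\<close> dims by linarith
    moreover have "C \<inter> U = {0}" using C(2) by blast
    ultimately show ?thesis using U(1) C(1) dims by (metis add.commute)
  qed
qed

lemma block_map_i:
  fixes f :: "real^3 \<Rightarrow> real^4"
  assumes iso: "linear_iso_onto f g W" and sV: "subspace V" and VW: "V \<inter> W = {0}"
    and u: "u \<in> V" "u \<noteq> 0"
  shows "linear (\<lambda>y. f (proj3 y) + (y$4) *\<^sub>R u)" and "inj (\<lambda>y. f (proj3 y) + (y$4) *\<^sub>R u)"
proof -
  have lf: "linear f" and fW: "\<And>x. f x \<in> W" using iso by (auto simp: linear_iso_onto_def)
  have l4: "linear (\<lambda>y :: real^4. y $ 4)" and lu: "linear (\<lambda>t. t *\<^sub>R u)"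
    by (rule bounded_linear.linear[OF bounded_linear_vec_nth],
        rule bounded_linear.linear[OF bounded_linear_scaleR_left])
  show "linear (\<lambda>y. f (proj3 y) + (y$4) *\<^sub>R u)"
    by (rule linear_compose_add[OF linear_compose'[OF lf linear_proj3] linear_compose'[OF lu l4]])
  have "y = 0" if "proj3 y = 0" "y $ 4 = 0" for y :: "real^4"
    using incl3_proj3[of y] that by simp
  moreover have "t = 0" if "t *\<^sub>R u = 0" for t using that u(2) by simp
  moreover have "t *\<^sub>R u \<in> V" for t using u sV by (simp add: subspace_scale)
  moreover have "W \<inter> V = {0}" using VW by blast
  ultimately show "inj (\<lambda>y. f (proj3 y) + (y$4) *\<^sub>R u)"
    by (intro inj_sum_of_disjoint_images[OF linear_proj3 l4 _ lf lu linear_iso_onto_inj(2)[OF iso] _ fW _ sV])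
qed

lemma block_map_i_intertwines:
  assumes iso: "linear_iso_onto f g W" and MW: "\<And>y. y \<in> W \<Longrightarrow> M *v y \<in> W" and Mu: "M *v u = u"
  shows "M *v (f (proj3 y) + (y$4) *\<^sub>R u) =
    f (proj3 (embed_i (matrix (\<lambda>x. g (M *v f x))) *v y)) + ((embed_i (matrix (\<lambda>x. g (M *v f x))) *v y)$4) *\<^sub>R u"
  using linear_iso_onto_restriction[OF iso MW, of "proj3 y"] Mu
  by (simp add: embed_i_mult_vec matrix_vector_right_distrib matrix_vector_mult_scaleR)

lemma block_map_j:
  fixes f1 f2 :: "real^2 \<Rightarrow> real^4"
  assumes iso1: "linear_iso_onto f1 g1 V" and iso2: "linear_iso_onto f2 g2 W"
    and sW: "subspace W" and VW: "V \<inter> W = {0}"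
  shows "linear (\<lambda>y. f1 (proj12 y) + f2 (proj34 y))" and "inj (\<lambda>y. f1 (proj12 y) + f2 (proj34 y))"
proof -
  have lf1: "linear f1" and f1V: "\<And>x. f1 x \<in> V" and lf2: "linear f2" and f2W: "\<And>x. f2 x \<in> W"
    using iso1 iso2 by (auto simp: linear_iso_onto_def)
  show "linear (\<lambda>y. f1 (proj12 y) + f2 (proj34 y))"
    by (rule linear_compose_add[OF linear_compose'[OF lf1 linear_proj12] linear_compose'[OF lf2 linear_proj34]])
  have "y = 0" if "proj12 y = 0" "proj34 y = 0" for y using incl12_proj12[of y] that by simp
  then show "inj (\<lambda>y. f1 (proj12 y) + f2 (proj34 y))"
    by (rule inj_sum_of_disjoint_images[OF linear_proj12 linear_proj34 _ lf1 lf2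
          linear_iso_onto_inj(2)[OF iso1] linear_iso_onto_inj(2)[OF iso2] f1V f2W sW VW])
qed

lemma block_map_j_intertwines:
  assumes iso1: "linear_iso_onto f1 g1 V" and iso2: "linear_iso_onto f2 g2 W"
    and MV: "\<And>y. y \<in> V \<Longrightarrow> M *v y \<in> V" and MW: "\<And>y. y \<in> W \<Longrightarrow> M *v y \<in> W"
  shows "M *v (f1 (proj12 y) + f2 (proj34 y)) =
    f1 (proj12 (embed_j (matrix (\<lambda>x. g1 (M *v f1 x))) (matrix (\<lambda>x. g2 (M *v f2 x))) *v y)) +
    f2 (proj34 (embed_j (matrix (\<lambda>x. g1 (M *v f1 x))) (matrix (\<lambda>x. g2 (M *v f2 x))) *v y))"
  using linear_iso_onto_restriction[OF iso1 MV, of "proj12 y"] linear_iso_onto_restriction[OF iso2 MW, of "proj34 y"]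
  by (simp add: embed_j_mult_vec matrix_vector_right_distrib)

lemma conj_embed_i_of_split:
  fixes A B :: "real^4^4"
  assumes r: "rep_Gamma_SL A B" and ss: "semisimple_rep A B"
    and iV: "invariant_subspace A B V" and iW: "invariant_subspace A B W"
    and VW: "V \<inter> W = {0}" and dV: "dim V = 1" and dW: "dim W = 3"
  shows "\<exists>P::real^4^4. det P = 1 \<and> (\<exists>A' B' :: real^3^3.
                 rep_Gamma_SL A' B' \<and> semisimple_rep A' B' \<and>
                 conj_SL P A = embed_i A' \<and> conj_SL P B = embed_i B')"
proof -
  have sV: "subspace V" and sW: "subspace W" using iV iW by (auto simp: invariant_subspace_def)
  have AW: "\<And>y. y \<in> W \<Longrightarrow> A *v y \<in> W" "\<And>y. y \<in> W \<Longrightarrow> B *v y \<in> W"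
    using iW by (auto simp: invariant_subspace_def)
  have "\<not> V \<subseteq> {0}" using dV by (metis dim_eq_0 zero_neq_one)
  then obtain v where v: "v \<in> V" "v \<noteq> 0" by auto
  obtain f :: "real^3 \<Rightarrow> real^4" and g where iso: "linear_iso_onto f g W"
    using linear_iso_onto_exists[OF sW, where 'm=3] dW by auto
  define h where "h u y = f (proj3 y) + (y$4) *\<^sub>R u" for u y
  note h = block_map_i[OF iso sV VW, folded h_def]
  define u where "u = (1 / det (matrix (h v))) *\<^sub>R v"
  have u: "u \<in> V" "u \<noteq> 0"
    using v sV det_matrix_neq_0_of_inj[OF h[OF v]] by (simp_all add: u_def subspace_scale)
  have "det (matrix (h u)) = det (matrix (h v)) * (1 / det (matrix (h v)))"
    by (rule det_matrix_rescaled[OF h(1)[OF v]]) (simp add: h_def u_def diag_last_mult_vec)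
  then have det_h: "det (matrix (h u)) = 1" using det_matrix_neq_0_of_inj[OF h[OF v]] by simp
  note fixed = rep_Gamma_SL_invariant_line_fixed[OF r iV dV u(1)]
  define A' where "A' = matrix (\<lambda>x. g (A *v f x))"
  define B' where "B' = matrix (\<lambda>x. g (B *v f x))"
  have "\<exists>P. det P = 1 \<and> conj_SL P A = embed_i A' \<and> conj_SL P B = embed_i B'"
    using conj_SL_exists_of_intertwining[OF h[OF u] det_h] block_map_i_intertwines[OF iso AW(1) fixed(1)]
      block_map_i_intertwines[OF iso AW(2) fixed(2)] by (simp add: h_def A'_def B'_def)
  moreover note resA = linear_iso_onto_restriction[OF iso AW(1), folded A'_def]
    and resB = linear_iso_onto_restriction[OF iso AW(2), folded B'_def]
  moreover have "linear f" "range f = W" using iso by (simp_all add: linear_iso_onto_def)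
  ultimately show ?thesis
    using rep_Gamma_SL_intertwined[OF linear_iso_onto_inj(1)[OF iso] resA resB r]
      semisimple_rep_restrict[OF ss iW _ linear_iso_onto_inj(1)[OF iso] _ resA resB]
    by blast
qed

lemma conj_embed_j_of_split:
  fixes A B :: "real^4^4"
  assumes r: "rep_Gamma_SL A B" and ss: "semisimple_rep A B"
    and iV: "invariant_subspace A B V" and iW: "invariant_subspace A B W"
    and VW: "V \<inter> W = {0}" and dV: "dim V = 2" and dW: "dim W = 2"
  shows "\<exists>P::real^4^4. det P = 1 \<and> (\<exists>A1 B1 A2 B2 :: real^2^2.
                 rep_Gamma_SL A1 B1 \<and> semisimple_rep A1 B1 \<and>
                 rep_Gamma_SL A2 B2 \<and> semisimple_rep A2 B2 \<and>
                 conj_SL P A = embed_j A1 A2 \<and> conj_SL P B = embed_j B1 B2)"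
proof -
  have sV: "subspace V" and sW: "subspace W" using iV iW by (auto simp: invariant_subspace_def)
  have AV: "\<And>y. y \<in> V \<Longrightarrow> A *v y \<in> V" "\<And>y. y \<in> V \<Longrightarrow> B *v y \<in> V"
    and AW: "\<And>y. y \<in> W \<Longrightarrow> A *v y \<in> W" "\<And>y. y \<in> W \<Longrightarrow> B *v y \<in> W"
    using iV iW by (auto simp: invariant_subspace_def)
  obtain f1 :: "real^2 \<Rightarrow> real^4" and g1 where iso1: "linear_iso_onto f1 g1 V"
    using linear_iso_onto_exists[OF sV, where 'm=2] dV by auto
  obtain f2 :: "real^2 \<Rightarrow> real^4" and g2 where iso2: "linear_iso_onto f2 g2 W"
    using linear_iso_onto_exists[OF sW, where 'm=2] dW by auto
  define h where "h F y = f1 (proj12 y) + F (proj34 y)" for F :: "real^2 \<Rightarrow> real^4" and y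
  note h2 = block_map_j[OF iso1 iso2 sW VW, folded h_def]
  define c where "c = 1 / det (matrix (h f2))"
  have "c \<noteq> 0" using det_matrix_neq_0_of_inj[OF h2] by (simp add: c_def)
  define f where "f z = f2 (vector [z$1, c * z$2])" for z :: "real^2"
  define g where "g w = (vector [g2 w $ 1, g2 w $ 2 / c] :: real^2)" for w
  have iso: "linear_iso_onto f g W"
    unfolding f_def g_def by (rule linear_iso_onto_rescale[OF iso2 \<open>c \<noteq> 0\<close>])
  note h = block_map_j[OF iso1 iso sW VW, folded h_def]
  have "det (matrix (h f)) = det (matrix (h f2)) * c"
    by (rule det_matrix_rescaled[OF h2(1)]) (simp add: h_def f_def diag_last_mult_vec, simp add: proj34_def)
  then have det_h: "det (matrix (h f)) = 1" using det_matrix_neq_0_of_inj[OF h2] by (simp add: c_def)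
  define A1 where "A1 = matrix (\<lambda>x. g1 (A *v f1 x))"
  define B1 where "B1 = matrix (\<lambda>x. g1 (B *v f1 x))"
  define A2 where "A2 = matrix (\<lambda>x. g (A *v f x))"
  define B2 where "B2 = matrix (\<lambda>x. g (B *v f x))"
  have "\<exists>P. det P = 1 \<and> conj_SL P A = embed_j A1 A2 \<and> conj_SL P B = embed_j B1 B2"
    using conj_SL_exists_of_intertwining[OF h det_h] block_map_j_intertwines[OF iso1 iso AV(1) AW(1)]
      block_map_j_intertwines[OF iso1 iso AV(2) AW(2)] by (simp add: h_def A1_def B1_def A2_def B2_def)
  moreover note resA1 = linear_iso_onto_restriction[OF iso1 AV(1), folded A1_def]
    and resB1 = linear_iso_onto_restriction[OF iso1 AV(2), folded B1_def]
    and resA2 = linear_iso_onto_restriction[OF iso AW(1), folded A2_def]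
    and resB2 = linear_iso_onto_restriction[OF iso AW(2), folded B2_def]
  moreover have "linear f1" "range f1 = V" "linear f" "range f = W"
    using iso1 iso by (simp_all add: linear_iso_onto_def)
  ultimately show ?thesis
    using rep_Gamma_SL_intertwined[OF linear_iso_onto_inj(1)[OF iso1] resA1 resB1 r]
      rep_Gamma_SL_intertwined[OF linear_iso_onto_inj(1)[OF iso] resA2 resB2 r]
      semisimple_rep_restrict[OF ss iV _ linear_iso_onto_inj(1)[OF iso1] _ resA1 resB1]
      semisimple_rep_restrict[OF ss iW _ linear_iso_onto_inj(1)[OF iso] _ resA2 resB2]
    by blast
qed

lemma semisimple_rep_conj_block_form:
  fixes A B :: "real^4^4"
  assumes r: "rep_Gamma_SL A B" and ss: "semisimple_rep A B"
  shows "(\<exists>P::real^4^4. det P = 1 \<and> (\<exists>A' B' :: real^3^3.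
                 rep_Gamma_SL A' B' \<and> semisimple_rep A' B' \<and>
                 conj_SL P A = embed_i A' \<and> conj_SL P B = embed_i B'))
            \<or> (\<exists>P::real^4^4. det P = 1 \<and> (\<exists>A1 B1 A2 B2 :: real^2^2.
                 rep_Gamma_SL A1 B1 \<and> semisimple_rep A1 B1 \<and>
                 rep_Gamma_SL A2 B2 \<and> semisimple_rep A2 B2 \<and>
                 conj_SL P A = embed_j A1 A2 \<and> conj_SL P B = embed_j B1 B2))"
proof -
  obtain V W where VW: "invariant_subspace A B V" "invariant_subspace A B W" "V \<inter> W = {0}"
    "dim V = 1 \<or> dim V = 2" "dim V + dim W = 4"
    using semisimple_split_small_summand[OF r ss] by blast
  then show ?thesis
    using conj_embed_i_of_split[OF r ss VW(1-3)] conj_embed_j_of_split[OF r ss VW(1-3)] by auto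
qed

theorem proposition4p4:
  shows "(\<forall>(A::real^4^4) B. rep_Gamma_SL A B \<and> semisimple_rep A B \<longrightarrow>
            \<not> irreducible_rep A B
          \<and> (\<exists>V. invariant_subspace A B V \<and> (dim V = 1 \<or> dim V = 2))
          \<and> ((\<exists>P::real^4^4. det P = 1 \<and> (\<exists>A' B' :: real^3^3.
                 rep_Gamma_SL A' B' \<and> semisimple_rep A' B' \<and>
                 conj_SL P A = embed_i A' \<and> conj_SL P B = embed_i B'))
            \<or> (\<exists>P::real^4^4. det P = 1 \<and> (\<exists>A1 B1 A2 B2 :: real^2^2.
                 rep_Gamma_SL A1 B1 \<and> semisimple_rep A1 B1 \<and>
                 rep_Gamma_SL A2 B2 \<and> semisimple_rep A2 B2 \<and>
                 conj_SL P A = embed_j A1 A2 \<and> conj_SL P B = embed_j B1 B2))))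
       \<and> (\<forall>A' B' :: real^3^3. rep_Gamma_SL A' B' \<and> semisimple_rep A' B' \<longrightarrow>
            rep_Gamma_SL (embed_i A') (embed_i B') \<and> semisimple_rep (embed_i A') (embed_i B'))
       \<and> (\<forall>A1 B1 A2 B2 :: real^2^2.
            rep_Gamma_SL A1 B1 \<and> semisimple_rep A1 B1 \<and> rep_Gamma_SL A2 B2 \<and> semisimple_rep A2 B2 \<longrightarrow>
            rep_Gamma_SL (embed_j A1 A2) (embed_j B1 B2) \<and> semisimple_rep (embed_j A1 A2) (embed_j B1 B2))"
proof (intro conjI allI impI)
  fix A B :: "real^4^4"
  assume "rep_Gamma_SL A B \<and> semisimple_rep A B"
  then obtain V W where "invariant_subspace A B V" "dim V = 1 \<or> dim V = 2"
    using semisimple_split_small_summand by blast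
  then show "\<not> irreducible_rep A B" "\<exists>V. invariant_subspace A B V \<and> (dim V = 1 \<or> dim V = 2)"
    unfolding irreducible_rep_def by force+
qed (use semisimple_rep_conj_block_form rep_Gamma_SL_embed_i rep_Gamma_SL_embed_j
    semisimple_rep_embed_i semisimple_rep_embed_j in blast)+

end
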